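(* Let $B=\{\boldsymbol\phi,\boldsymbol D_0,\boldsymbol D_1,\boldsymbol R\}$ be the matrix representation of a bivariate $MMPP_2$ and let $\boldsymbol A=(T_1,K_1)$ be the (row vector of) time and distance until the first failure. Then there exists $K>0$ such that the moment-generating function of $\boldsymbol A$ exists and is given by $$H(\boldsymbol\theta)=E\left(e^{\boldsymbol A\boldsymbol\theta}\right)=\boldsymbol\phi\left(-\boldsymbol\Delta(\boldsymbol R\boldsymbol\theta)-\boldsymbol D_0\right)^{-1}\boldsymbol D_1\boldsymbol e$$ for any $\theta_1,\theta_2<K$, where $\boldsymbol\theta=[\theta_1,\theta_2]^t$.
   Context: Bivariate $MMPP_2$ with parameters $\boldsymbol\lambda=(\lambda_1,\lambda_2,\lambda_3)$, $\boldsymbol\omega=(\omega_1,\omega_2,\omega_3)$ ($\lambda_1,\lambda_2,\omega_1,\omega_2>0$, $\lambda_3,\omega_3\ge0$) and $a,b\in[0,1]$: using the Marshall–Olkin law $BVE(\mu_1,\mu_2,\mu_3)$ defined by $P(X>x,Y>y)=\exp\{-\mu_1x-\mu_2y-\mu_3\max(x,y)\}$, the process starts in state $s_0\in\{1,2\}$ with $P(s_0=1)=\phi_1$; at each step, in state 1 (resp. 2) an increment $(X,Y)\sim BVE(\boldsymbol\lambda)$ (resp. $BVE(\boldsymbol\omega)$) is drawn independently; then from state 1 with probability $a$ there is no failure and the state becomes 2, with probability $1-a$ a failure occurs and the state stays 1 (analogously with $b$ from state 2). $(T_n,K_n)$ is the sum of the increments between the $(n-1)$-th and the $n$-th failures.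 Here $\phi_1=\frac{b(1-a)}{b(1-a)+a(1-b)}$, $\phi_2=\frac{a(1-b)}{b(1-a)+a(1-b)}$, $\gamma_{t1}=\lambda_1+\lambda_3$, $\gamma_{k1}=\lambda_2+\lambda_3$, $\gamma_{t2}=\omega_1+\omega_3$, $\gamma_{k2}=\omega_2+\omega_3$. The matrix representation is $\boldsymbol\phi=(\phi_1,0,0,\phi_2,0,0)$, $$\boldsymbol D_0=\begin{pmatrix}-(\lambda_1+\lambda_2+\lambda_3)&\lambda_2&\lambda_1&\lambda_3a&0&0\\0&-\gamma_{t1}&0&\gamma_{t1}a&0&0\\0&0&-\gamma_{k1}&\gamma_{k1}a&0&0\\\omega_3b&0&0&-(\omega_1+\omega_2+\omega_3)&\omega_2&\omega_1\\\gamma_{t2}b&0&0&0&-\gamma_{t2}&0\\\gamma_{k2}b&0&0&0&0&-\gamma_{k2}\end{pmatrix},$$ $$\boldsymbol D_1=\begin{pmatrix}\lambda_3(1-a)&0&0&0&0&0\\\gamma_{t1}(1-a)&0&0&0&0&0\\\gamma_{k1}(1-a)&0&0&0&0&0\\0&0&0&\omega_3(1-b)&0&0\\0&0&0&\gamma_{t2}(1-b)&0&0\\0&0&0&\gamma_{k2}(1-b)&0&0\end{pmatrix},\quad \boldsymbol R=\begin{pmatrix}1&1\\1&0\\0&1\\1&1\\1&0\\0&1\end{pmatrix}.$$ $\boldsymbol\Delta(\boldsymbol v)$ denotes the diagonal matrix with the vector $\boldsymbol v$ on its diagonal, and $\boldsymbol e$ is the column vector of ones. *)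

theory Defs
  imports "HOL-Analysis.Analysis" "HOL-Probability.Probability"
begin

text \<open>Rows/columns of a 6x6 (resp. 6x2) matrix are indexed by the numeral types 6 and 2;
  the element i of such a type corresponds to list position nat (Rep_bit0 i), i.e. to the
  paper's index (nat (Rep_bit0 i) + 1).\<close>

definition vec6 :: "real list \<Rightarrow> real ^ 6" where
  "vec6 xs = (\<chi> i. xs ! nat (Rep_bit0 i))"

definition mat66 :: "real list list \<Rightarrow> real ^ 6 ^ 6" where
  "mat66 L = (\<chi> i j. L ! nat (Rep_bit0 i) ! nat (Rep_bit0 j))"

definition mat62 :: "real list list \<Rightarrow> real ^ 2 ^ 6" where
  "mat62 L = (\<chi> i j. L ! nat (Rep_bit0 i) ! nat (Rep_bit0 j))"

definition Delta :: "real ^ 'n \<Rightarrow> real ^ 'n ^ 'n" where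
  "Delta v = (\<chi> i j. if i = j then v $ i else 0)"

definition ones :: "real ^ 'n" where
  "ones = (\<chi> i. 1)"

definition phi1 :: "real \<Rightarrow> real \<Rightarrow> real" where
  "phi1 a b = b * (1 - a) / (b * (1 - a) + a * (1 - b))"

definition phi2 :: "real \<Rightarrow> real \<Rightarrow> real" where
  "phi2 a b = a * (1 - b) / (b * (1 - a) + a * (1 - b))"

definition mmpp_phi :: "real \<Rightarrow> real \<Rightarrow> real ^ 6" where
  "mmpp_phi a b = vec6 [phi1 a b, 0, 0, phi2 a b, 0, 0]"

definition mmpp_D0 :: "real \<Rightarrow> real \<Rightarrow> real \<Rightarrow> real \<Rightarrow> real \<Rightarrow> real \<Rightarrow> real \<Rightarrow> real
    \<Rightarrow> real ^ 6 ^ 6" where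
  "mmpp_D0 l1 l2 l3 w1 w2 w3 a b =
    (let gt1 = l1 + l3; gk1 = l2 + l3; gt2 = w1 + w3; gk2 = w2 + w3 in
     mat66 [[-(l1 + l2 + l3), l2, l1, l3 * a, 0, 0],
            [0, -gt1, 0, gt1 * a, 0, 0],
            [0, 0, -gk1, gk1 * a, 0, 0],
            [w3 * b, 0, 0, -(w1 + w2 + w3), w2, w1],
            [gt2 * b, 0, 0, 0, -gt2, 0],
            [gk2 * b, 0, 0, 0, 0, -gk2]])"

definition mmpp_D1 :: "real \<Rightarrow> real \<Rightarrow> real \<Rightarrow> real \<Rightarrow> real \<Rightarrow> real \<Rightarrow> real \<Rightarrow> real
    \<Rightarrow> real ^ 6 ^ 6" where
  "mmpp_D1 l1 l2 l3 w1 w2 w3 a b =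
    (let gt1 = l1 + l3; gk1 = l2 + l3; gt2 = w1 + w3; gk2 = w2 + w3 in
     mat66 [[l3 * (1 - a), 0, 0, 0, 0, 0],
            [gt1 * (1 - a), 0, 0, 0, 0, 0],
            [gk1 * (1 - a), 0, 0, 0, 0, 0],
            [0, 0, 0, w3 * (1 - b), 0, 0],
            [0, 0, 0, gt2 * (1 - b), 0, 0],
            [0, 0, 0, gk2 * (1 - b), 0, 0]])"

definition mmpp_R :: "real ^ 2 ^ 6" where
  "mmpp_R = mat62 [[1, 1], [1, 0], [0, 1], [1, 1], [1, 0], [0, 1]]"

definition mmpp_H :: "real \<Rightarrow> real \<Rightarrow> real \<Rightarrow> real \<Rightarrow> real \<Rightarrow> real \<Rightarrow> real \<Rightarrow> real
    \<Rightarrow> real \<Rightarrow> real \<Rightarrow> real" where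
  "mmpp_H l1 l2 l3 w1 w2 w3 a b th1 th2 =
    (let theta = (\<chi> i. if i = 0 then th1 else th2) :: real ^ 2 in
     (mmpp_phi a b v* matrix_inv (- Delta (mmpp_R *v theta) - mmpp_D0 l1 l2 l3 w1 w2 w3 a b))
       \<bullet> (mmpp_D1 l1 l2 l3 w1 w2 w3 a b *v ones))"

definition BVE_surv :: "real \<Rightarrow> real \<Rightarrow> real \<Rightarrow> real \<Rightarrow> real \<Rightarrow> real" where
  "BVE_surv m1 m2 m3 x y = exp (- m1 * x - m2 * y - m3 * max x y)"

text \<open>Primitive random quantities: the initial state s0 (values 1 or 2); for each state s in {1,2}
  and step j (j = 0,1,2,...) an increment Z s j (used if the process is in state s at step j)
  and a coin C s j (True = no failure and switch of state; False = failure, state kept).\<close>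

datatype mmpp_index = Init | Incr nat nat | Coin nat nat

definition mmpp_indices :: "mmpp_index set" where
  "mmpp_indices = {Init} \<union> {Incr s j | s j. s \<in> {1, 2}} \<union> {Coin s j | s j. s \<in> {1, 2}}"

definition gen_sets :: "'a measure \<Rightarrow> ('a \<Rightarrow> 'b) \<Rightarrow> 'b measure \<Rightarrow> 'a set set" where
  "gen_sets M X N = {X -` A \<inter> space M | A. A \<in> sets N}"

fun mmpp_state :: "(nat \<Rightarrow> nat \<Rightarrow> 'a \<Rightarrow> bool) \<Rightarrow> ('a \<Rightarrow> nat) \<Rightarrow> 'a \<Rightarrow> nat \<Rightarrow> nat" where
  "mmpp_state C s0 w 0 = s0 w"
| "mmpp_state C s0 w (Suc j) =
     (let s = mmpp_state C s0 w j in if C s j w then 3 - s else s)"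

definition first_failure :: "(nat \<Rightarrow> nat \<Rightarrow> 'a \<Rightarrow> bool) \<Rightarrow> ('a \<Rightarrow> nat) \<Rightarrow> 'a \<Rightarrow> nat" where
  "first_failure C s0 w = (LEAST j. \<not> C (mmpp_state C s0 w j) j w)"

definition first_TK :: "(nat \<Rightarrow> nat \<Rightarrow> 'a \<Rightarrow> real \<times> real) \<Rightarrow> (nat \<Rightarrow> nat \<Rightarrow> 'a \<Rightarrow> bool)
    \<Rightarrow> ('a \<Rightarrow> nat) \<Rightarrow> 'a \<Rightarrow> real \<times> real" where
  "first_TK Z C s0 w = (\<Sum>j \<le> first_failure C s0 w. Z (mmpp_state C s0 w j) j w)"

end

theory Submission
  imports Defs "HOL-Real_Asymp.Real_Asymp"
begin

text \<open>Before the first failure every step switches the state, so the first failure happens at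
  step \<open>n\<close> from the initial state \<open>s\<close> exactly on an event determined by \<open>s\<^sub>0\<close> and by the
  coins along the alternating path \<open>s, 3 - s, s, \<dots>\<close>. By independence, the expectation of
  \<open>exp (A \<theta>)\<close> on that event is the product of \<open>P(s\<^sub>0 = s)\<close>, of factors \<open>a L\<^sub>1(\<theta>)\<close>, \<open>b L\<^sub>2(\<theta>)\<close> for
  the steps without failure and of \<open>(1 - a) L\<^sub>1(\<theta>)\<close> or \<open>(1 - b) L\<^sub>2(\<theta>)\<close> for the failing step, where
  \<open>L\<^sub>1\<close>, \<open>L\<^sub>2\<close> are the moment generating functions of the Marshall--Olkin increments, computed
  from the joint survival function with Tonelli's theorem. Summing over \<open>n\<close> gives a geometric
  series in \<open>a b L\<^sub>1 L\<^sub>2\<close>, which is below \<open>1\<close> near \<open>\<theta> = 0\<close>. Its value is \<open>\<phi>\<^sub>1 m\<^sub>1 + \<phi>\<^sub>2 m\<^sub>2\<close>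
  with \<open>m\<^sub>1 = L\<^sub>1 (1 - a + a m\<^sub>2)\<close> and \<open>m\<^sub>2 = L\<^sub>2 (1 - b + b m\<^sub>1)\<close>, and these renewal equations are
  what the linear system \<open>(-\<Delta>(R\<theta>) - D\<^sub>0) x = D\<^sub>1 e\<close> defining \<open>H(\<theta>)\<close> reduces to.\<close>

definition exp_primitive :: "real \<Rightarrow> real \<Rightarrow> real" where
  "exp_primitive t x = (if t = 0 then x else (exp (t * x) - 1) / t)"

lemma exp_eq_1_plus_exp_primitive: "exp (t * x) = 1 + t * exp_primitive t x"
  by (simp add: exp_primitive_def)

lemma exp_primitive_nonneg:
  assumes "0 \<le> x"
  shows "0 \<le> exp_primitive t x"
proof (cases t "0 :: real" rule: linorder_cases)
  case less
  then have "exp (t * x) \<le> 1" using assms by (simp add: mult_nonpos_nonneg)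
  then show ?thesis using less by (simp add: exp_primitive_def divide_nonpos_neg)
next
  case greater
  then have "1 \<le> exp (t * x)" using assms by simp
  then show ?thesis using greater by (simp add: exp_primitive_def)
qed (use assms in \<open>simp add: exp_primitive_def\<close>)

lemma has_real_derivative_exp_primitive:
  "(exp_primitive t has_real_derivative exp (t * x)) (at x)"
proof (cases "t = 0")
  case False
  have "((\<lambda>x. (exp (t * x) - 1) / t) has_real_derivative exp (t * x)) (at x)"
    by (rule derivative_eq_intros refl | use False in simp)+
  then show ?thesis using False by (simp add: exp_primitive_def[abs_def])
qed (simp add: exp_primitive_def[abs_def])

lemma borel_measurable_exp_primitive [measurable]: "exp_primitive t \<in> borel_measurable borel"
  unfolding exp_primitive_def[abs_def] by (cases "t = 0") simp_all

lemma has_real_derivative_exp_div: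
  "(c :: real) \<noteq> 0 \<Longrightarrow> ((\<lambda>y. exp (c * y) / c) has_real_derivative exp (c * x)) (at x)"
  by (rule derivative_eq_intros refl | simp)+

lemma nn_integral_exp_Icc:
  assumes "0 \<le> x"
  shows "(\<integral>\<^sup>+u. ennreal (exp (t * u)) * indicator {0..x} u \<partial>lborel) = ennreal (exp_primitive t x)"
proof -
  have "(\<integral>\<^sup>+u. ennreal (exp (t * u)) * indicator {0..x} u \<partial>lborel)
      = ennreal (exp_primitive t x - exp_primitive t 0)"
    by (rule nn_integral_FTC_Icc) (use assms has_real_derivative_exp_primitive in auto)
  then show ?thesis by (simp add: exp_primitive_def)
qed

lemma nn_integral_exp_Ico:
  assumes "0 \<le> x"
  shows "(\<integral>\<^sup>+u. ennreal (exp (t * u)) * indicator {0..<x} u \<partial>lborel) = ennreal (exp_primitive t x)"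
proof -
  have "(\<integral>\<^sup>+u. ennreal (exp (t * u)) * indicator {0..<x} u \<partial>lborel)
      = (\<integral>\<^sup>+u. ennreal (exp (t * u)) * indicator {0..x} u \<partial>lborel)"
    by (rule nn_integral_cong_AE)
      (use AE_lborel_singleton[of x] in \<open>eventually_elim, auto simp: indicator_def\<close>)
  then show ?thesis using nn_integral_exp_Icc[OF assms] by simp
qed

lemma nn_integral_exp_atLeast:
  assumes "c < 0"
  shows "(\<integral>\<^sup>+u. ennreal (exp (c * u)) * indicator {x..} u \<partial>lborel) = ennreal (exp (c * x) / - c)"
proof -
  have "(\<integral>\<^sup>+u. ennreal (exp (c * u)) * indicator {x..} u \<partial>lborel) = ennreal (0 - exp (c * x) / c)"
  proof (rule nn_integral_FTC_atLeast)
    show "((\<lambda>u. exp (c * u) / c) \<longlongrightarrow> 0) at_top" using assms by real_asymp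
  qed (use assms has_real_derivative_exp_div in auto)
  then show ?thesis by simp
qed

lemma nn_integral_exp_greaterThan:
  assumes "c < 0"
  shows "(\<integral>\<^sup>+u. ennreal (exp (c * u)) * indicator {x<..} u \<partial>lborel) = ennreal (exp (c * x) / - c)"
proof -
  have "(\<integral>\<^sup>+u. ennreal (exp (c * u)) * indicator {x<..} u \<partial>lborel)
      = (\<integral>\<^sup>+u. ennreal (exp (c * u)) * indicator {x..} u \<partial>lborel)"
    by (rule nn_integral_cong_AE)
      (use AE_lborel_singleton[of x] in \<open>eventually_elim, auto simp: indicator_def\<close>)
  then show ?thesis using nn_integral_exp_atLeast[OF assms] by simp
qed

lemma nn_integral_exp_minus_max:
  assumes "0 \<le> u" "b < 0" "0 \<le> m"
  shows "(\<integral>\<^sup>+v. ennreal (exp (b * v - m * max v u)) * indicator {0..} v \<partial>lborel)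
       = ennreal (exp (- m * u) * exp_primitive b u + exp ((b - m) * u) / (m - b))"
proof -
  have "(\<integral>\<^sup>+v. ennreal (exp (b * v - m * max v u)) * indicator {0..} v \<partial>lborel)
      = (\<integral>\<^sup>+v. ennreal (exp (- m * u)) * (ennreal (exp (b * v)) * indicator {0..u} v)
                + ennreal (exp ((b - m) * v)) * indicator {u<..} v \<partial>lborel)"
  proof (rule nn_integral_cong)
    fix v :: real
    show "ennreal (exp (b * v - m * max v u)) * indicator {0..} v
      = ennreal (exp (- m * u)) * (ennreal (exp (b * v)) * indicator {0..u} v)
        + ennreal (exp ((b - m) * v)) * indicator {u<..} v"
    proof (cases "v \<le> u")
      case True
      then have "exp (b * v - m * max v u) = exp (- m * u) * exp (b * v)"
        by (simp add: max_def mult_exp_exp)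
      then show ?thesis using True by (auto simp: indicator_def ennreal_mult)
    next
      case False
      then have "exp (b * v - m * max v u) = exp ((b - m) * v)"
        by (simp add: max_def algebra_simps)
      then show ?thesis using False assms(1) by (auto simp: indicator_def)
    qed
  qed
  also have "\<dots> = ennreal (exp (- m * u)) * ennreal (exp_primitive b u) + ennreal (exp ((b - m) * u) / (m - b))"
    using nn_integral_exp_Icc[OF assms(1)] nn_integral_exp_greaterThan[of "b - m" u] assms
    by (simp add: nn_integral_add nn_integral_cmult)
  also have "\<dots> = ennreal (exp (- m * u) * exp_primitive b u + exp ((b - m) * u) / (m - b))"
    using exp_primitive_nonneg[OF assms(1)] assms by (simp add: ennreal_mult ennreal_plus)
  finally show ?thesis .
qed

lemma nn_integral_exp_minus_max_atLeast_0:
  assumes "a < 0" "b < 0" "0 \<le> m"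
  shows "(\<integral>\<^sup>+u. ennreal (exp (a * u) * (exp (- m * u) * exp_primitive b u + exp ((b - m) * u) / (m - b)))
            * indicator {0..} u \<partial>lborel)
       = ennreal ((1 / (m - a) + 1 / (m - b)) / (m - a - b))"
proof -
  define G where "G u = (1 / b) * (exp ((a + b - m) * u) / (a + b - m) - exp ((a - m) * u) / (a - m))
                        + (1 / (m - b)) * (exp ((a + b - m) * u) / (a + b - m))" for u
  have nz: "b \<noteq> 0" "a + b - m \<noteq> 0" "a - m \<noteq> 0" "m - b \<noteq> 0" "m - a \<noteq> 0" "m - a - b \<noteq> 0"
    using assms by auto
  have "(\<integral>\<^sup>+u. ennreal (exp (a * u) * (exp (- m * u) * exp_primitive b u + exp ((b - m) * u) / (m - b)))
            * indicator {0..} u \<partial>lborel) = ennreal (0 - G 0)"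
  proof (rule nn_integral_FTC_atLeast)
    have "((\<lambda>u. exp ((a + b - m) * u)) \<longlongrightarrow> 0) at_top" "((\<lambda>u. exp ((a - m) * u)) \<longlongrightarrow> 0) at_top"
      using assms by real_asymp+
    then show "(G \<longlongrightarrow> 0) at_top"
      unfolding G_def
      by (intro tendsto_add_zero tendsto_mult_right_zero tendsto_diff[where a=0 and b=0, simplified]
          tendsto_divide_zero)
  next
    fix u :: real
    assume "0 \<le> u"
    then show "0 \<le> exp (a * u) * (exp (- m * u) * exp_primitive b u + exp ((b - m) * u) / (m - b))"
      using exp_primitive_nonneg[of u b] assms
      by (intro mult_nonneg_nonneg add_nonneg_nonneg) auto
  next
    fix u :: real
    have "(G has_real_derivative (1 / b) * (exp ((a + b - m) * u) - exp ((a - m) * u))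
                                + (1 / (m - b)) * exp ((a + b - m) * u)) (at u)"
      unfolding G_def[abs_def]
      by (intro DERIV_add DERIV_cmult DERIV_diff has_real_derivative_exp_div) (use nz in auto)
    moreover have "(1 / b) * (exp ((a + b - m) * u) - exp ((a - m) * u)) + (1 / (m - b)) * exp ((a + b - m) * u)
        = exp (a * u) * (exp (- m * u) * exp_primitive b u + exp ((b - m) * u) / (m - b))"
      using nz by (simp add: exp_primitive_def exp_add exp_diff exp_minus field_simps)
    ultimately show "(G has_real_derivative
        exp (a * u) * (exp (- m * u) * exp_primitive b u + exp ((b - m) * u) / (m - b))) (at u)"
      by simp
  qed (auto simp: exp_primitive_def)
  also have "0 - G 0 = (1 / (m - a) + 1 / (m - b)) / (m - a - b)"
  proof -
    have "1 / (a + b - m) - 1 / (a - m) = - b / ((m - a - b) * (m - a))"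
      using nz by (simp add: divide_simps) (simp add: algebra_simps)
    then show ?thesis
      using nz by (simp add: G_def divide_simps) (simp add: algebra_simps)
  qed
  finally show ?thesis .
qed

lemma nn_integral_quadrant_exp_minus_max:
  assumes "a < 0" "b < 0" "0 \<le> m"
  shows "(\<integral>\<^sup>+u. \<integral>\<^sup>+v. ennreal (exp (a * u + b * v - m * max u v)) * indicator {0..} u * indicator {0..} v
            \<partial>lborel \<partial>lborel)
       = ennreal ((1 / (m - a) + 1 / (m - b)) / (m - a - b))"
proof -
  have "(\<integral>\<^sup>+v. ennreal (exp (a * u + b * v - m * max u v)) * indicator {0..} u * indicator {0..} v \<partial>lborel)
      = ennreal (exp (a * u) * (exp (- m * u) * exp_primitive b u + exp ((b - m) * u) / (m - b)))
        * indicator {0..} u" for u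
  proof (cases "0 \<le> u")
    case True
    have "(\<integral>\<^sup>+v. ennreal (exp (a * u + b * v - m * max u v)) * indicator {0..} u * indicator {0..} v \<partial>lborel)
        = (\<integral>\<^sup>+v. ennreal (exp (a * u)) * (ennreal (exp (b * v - m * max v u)) * indicator {0..} v) \<partial>lborel)"
      using True by (intro nn_integral_cong)
        (simp add: ennreal_mult[symmetric] mult_exp_exp max.commute algebra_simps)
    then show ?thesis
      using True nn_integral_exp_minus_max[OF True assms(2,3)] exp_primitive_nonneg[OF True] assms
      by (simp add: nn_integral_cmult ennreal_mult)
  qed simp
  then show ?thesis
    using nn_integral_exp_minus_max_atLeast_0[OF assms] by simp
qed

section \<open>The moment generating function of the Marshall--Olkin law\<close>

lemma (in sigma_finite_measure) nn_integral_tail: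
  fixes X :: "'a \<Rightarrow> real" and h :: "real \<Rightarrow> ennreal"
  assumes [measurable]: "X \<in> borel_measurable M" "h \<in> borel_measurable borel"
  shows "(\<integral>\<^sup>+w. (\<integral>\<^sup>+u. h u * indicator {0..<X w} u \<partial>lborel) \<partial>M)
       = (\<integral>\<^sup>+u. h u * indicator {0..} u * emeasure M {w\<in>space M. u < X w} \<partial>lborel)"
proof -
  interpret pair_sigma_finite M lborel ..
  have "(\<lambda>(w, u). h u * indicator {0..<X w} u) \<in> borel_measurable (M \<Otimes>\<^sub>M lborel)"
    by (simp add: indicator_def split_beta')
  from Fubini'[OF this] have "(\<integral>\<^sup>+w. (\<integral>\<^sup>+u. h u * indicator {0..<X w} u \<partial>lborel) \<partial>M)
      = (\<integral>\<^sup>+u. (\<integral>\<^sup>+w. h u * indicator {0..<X w} u \<partial>M) \<partial>lborel)"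
    by simp
  also have "\<dots> = (\<integral>\<^sup>+u. h u * indicator {0..} u * emeasure M {w\<in>space M. u < X w} \<partial>lborel)"
  proof (rule nn_integral_cong)
    fix u :: real
    have "(\<integral>\<^sup>+w. h u * indicator {0..<X w} u \<partial>M)
        = (\<integral>\<^sup>+w. (h u * indicator {0..} u) * indicator {w\<in>space M. u < X w} w \<partial>M)"
      by (rule nn_integral_cong) (auto simp: indicator_def)
    then show "(\<integral>\<^sup>+w. h u * indicator {0..<X w} u \<partial>M)
        = h u * indicator {0..} u * emeasure M {w\<in>space M. u < X w}"
      by (simp add: nn_integral_cmult_indicator)
  qed
  finally show ?thesis .
qed

lemma (in sigma_finite_measure) nn_integral_joint_tail:
  fixes X Y :: "'a \<Rightarrow> real" and h1 h2 :: "real \<Rightarrow> ennreal"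
  assumes [measurable]: "X \<in> borel_measurable M" "Y \<in> borel_measurable M"
    "h1 \<in> borel_measurable borel" "h2 \<in> borel_measurable borel"
  shows "(\<integral>\<^sup>+w. (\<integral>\<^sup>+u. h1 u * indicator {0..<X w} u \<partial>lborel) *
                (\<integral>\<^sup>+v. h2 v * indicator {0..<Y w} v \<partial>lborel) \<partial>M)
       = (\<integral>\<^sup>+u. \<integral>\<^sup>+v. h1 u * h2 v * indicator {0..} u * indicator {0..} v *
              emeasure M {w\<in>space M. u < X w \<and> v < Y w} \<partial>lborel \<partial>lborel)"
proof -
  interpret pair_sigma_finite M lborel ..
  define F where "F w u v = h1 u * indicator {0..<X w} u * (h2 v * indicator {0..<Y w} v)" for w u v
  have "(\<lambda>((w, u), v). F w u v) \<in> borel_measurable ((M \<Otimes>\<^sub>M lborel) \<Otimes>\<^sub>M lborel)"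
    by (simp add: F_def indicator_def split_beta')
  then have "(\<lambda>(w, u). \<integral>\<^sup>+v. F w u v \<partial>lborel) \<in> borel_measurable (M \<Otimes>\<^sub>M lborel)"
    using lborel.borel_measurable_nn_integral_fst by (simp add: case_prod_beta')
  note Fubini_outer = Fubini'[OF this]
  have "(\<lambda>(w, v). F w u v) \<in> borel_measurable (M \<Otimes>\<^sub>M lborel)" for u
    by (simp add: F_def indicator_def split_beta')
  note Fubini_inner = Fubini'[OF this]
  have "(\<integral>\<^sup>+w. (\<integral>\<^sup>+u. h1 u * indicator {0..<X w} u \<partial>lborel) *
                (\<integral>\<^sup>+v. h2 v * indicator {0..<Y w} v \<partial>lborel) \<partial>M)
      = (\<integral>\<^sup>+w. \<integral>\<^sup>+u. \<integral>\<^sup>+v. F w u v \<partial>lborel \<partial>lborel \<partial>M)"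
    unfolding F_def
    by (intro nn_integral_cong) (simp add: nn_integral_multc nn_integral_cmult)
  also have "\<dots> = (\<integral>\<^sup>+u. \<integral>\<^sup>+v. \<integral>\<^sup>+w. F w u v \<partial>M \<partial>lborel \<partial>lborel)"
    using Fubini_outer Fubini_inner by simp
  also have "\<dots> = (\<integral>\<^sup>+u. \<integral>\<^sup>+v. h1 u * h2 v * indicator {0..} u * indicator {0..} v *
              emeasure M {w\<in>space M. u < X w \<and> v < Y w} \<partial>lborel \<partial>lborel)"
  proof (intro nn_integral_cong)
    fix u v :: real
    have "(\<integral>\<^sup>+w. F w u v \<partial>M) = (\<integral>\<^sup>+w. (h1 u * h2 v * indicator {0..} u * indicator {0..} v) *
              indicator {w\<in>space M. u < X w \<and> v < Y w} w \<partial>M)"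
      by (rule nn_integral_cong) (auto simp: indicator_def F_def)
    then show "(\<integral>\<^sup>+w. F w u v \<partial>M) = h1 u * h2 v * indicator {0..} u * indicator {0..} v *
              emeasure M {w\<in>space M. u < X w \<and> v < Y w}"
      by (simp add: nn_integral_cmult_indicator)
  qed
  finally show ?thesis .
qed

lemma (in prob_space) nn_integral_exp_primitive_exponential_tail:
  fixes X :: "'a \<Rightarrow> real"
  assumes [measurable]: "X \<in> borel_measurable M"
    and nonneg: "AE w in M. 0 \<le> X w"
    and tail: "\<And>u. 0 \<le> u \<Longrightarrow> prob {w\<in>space M. u < X w} = exp (- c * u)"
    and "t < c"
  shows "(\<integral>\<^sup>+w. ennreal (exp_primitive t (X w)) \<partial>M) = ennreal (1 / (c - t))"
proof -
  have "(\<integral>\<^sup>+w. ennreal (exp_primitive t (X w)) \<partial>M)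
      = (\<integral>\<^sup>+w. (\<integral>\<^sup>+u. ennreal (exp (t * u)) * indicator {0..<X w} u \<partial>lborel) \<partial>M)"
    by (rule nn_integral_cong_AE) (use nonneg in \<open>eventually_elim, simp add: nn_integral_exp_Ico\<close>)
  also have "\<dots> = (\<integral>\<^sup>+u. ennreal (exp (t * u)) * indicator {0..} u * emeasure M {w\<in>space M. u < X w} \<partial>lborel)"
    by (rule nn_integral_tail) auto
  also have "\<dots> = (\<integral>\<^sup>+u. ennreal (exp ((t - c) * u)) * indicator {0..} u \<partial>lborel)"
  proof (rule nn_integral_cong)
    fix u :: real
    have "exp (t * u) * exp (- c * u) = exp ((t - c) * u)"
      by (simp add: mult_exp_exp algebra_simps)
    then show "ennreal (exp (t * u)) * indicator {0..} u * emeasure M {w\<in>space M. u < X w}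
        = ennreal (exp ((t - c) * u)) * indicator {0..} u"
      using tail[of u] by (simp add: emeasure_eq_measure indicator_def ennreal_mult[symmetric])
  qed
  also have "\<dots> = ennreal (1 / (c - t))"
    using nn_integral_exp_atLeast[of "t - c" 0] \<open>t < c\<close> by (simp add: divide_simps)
  finally show ?thesis .
qed

definition BVE_mgf :: "real \<Rightarrow> real \<Rightarrow> real \<Rightarrow> real \<Rightarrow> real \<Rightarrow> real" where
  "BVE_mgf m1 m2 m3 t1 t2 =
     (m2 * (m1 + m3) / (m1 + m3 - t1) + m1 * (m2 + m3) / (m2 + m3 - t2) + m3) / (m1 + m2 + m3 - t1 - t2)"

lemma BVE_mgf_pos:
  assumes "0 < m1" "0 < m2" "0 \<le> m3" "t1 < m1" "t2 < m2"
  shows "0 < BVE_mgf m1 m2 m3 t1 t2"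
  unfolding BVE_mgf_def using assms
  by (intro divide_pos_pos add_pos_nonneg add_pos_pos mult_pos_pos) auto

lemma BVE_mgf_0_0:
  assumes "0 < m1" "0 < m2" "0 \<le> m3"
  shows "BVE_mgf m1 m2 m3 0 0 = 1"
  using assms by (simp add: BVE_mgf_def add_ac)

lemma BVE_mgf_expansion:
  assumes "0 \<le> m3" "t1 < m1" "t2 < m2"
  shows "1 + t1 / (m1 + m3 - t1) + t2 / (m2 + m3 - t2)
           + t1 * t2 * ((1 / (m1 + m3 - t1) + 1 / (m2 + m3 - t2)) / (m1 + m2 + m3 - t1 - t2))
       = BVE_mgf m1 m2 m3 t1 t2"
proof -
  have "m1 + m3 - t1 \<noteq> 0" "m2 + m3 - t2 \<noteq> 0" "m1 + m2 + m3 - t1 - t2 \<noteq> 0"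
    using assms by auto
  then show ?thesis
    unfolding BVE_mgf_def by (simp add: divide_simps) (simp add: algebra_simps)
qed

lemma (in prob_space) AE_BVE_pos:
  assumes "prob {w\<in>space M. 0 < X w \<and> 0 < Y w} = BVE_surv m1 m2 m3 0 0"
  shows "AE w in M. 0 < X w \<and> 0 < Y w"
proof -
  have "prob {w\<in>space M. 0 < X w \<and> 0 < Y w} = 1"
    using assms by (simp add: BVE_surv_def)
  then show ?thesis
    by (rule AE_prob_1[THEN AE_mp]) simp
qed

lemma (in prob_space) BVE_marginal_tails:
  fixes X Y :: "'a \<Rightarrow> real"
  assumes [measurable]: "X \<in> borel_measurable M" "Y \<in> borel_measurable M"
    and surv: "\<And>x y. 0 \<le> x \<Longrightarrow> 0 \<le> y \<Longrightarrow>
                 prob {w\<in>space M. x < X w \<and> y < Y w} = BVE_surv m1 m2 m3 x y"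
    and "0 \<le> u"
  shows "prob {w\<in>space M. u < X w} = exp (- (m1 + m3) * u)"
    and "prob {w\<in>space M. u < Y w} = exp (- (m2 + m3) * u)"
proof -
  have pos: "AE w in M. 0 < X w \<and> 0 < Y w"
    using surv[of 0 0] by (rule AE_BVE_pos) simp_all
  have "prob {w\<in>space M. u < X w} = prob {w\<in>space M. u < X w \<and> 0 < Y w}"
    by (rule measure_eq_AE) (use pos in \<open>eventually_elim, auto\<close>)
  then show "prob {w\<in>space M. u < X w} = exp (- (m1 + m3) * u)"
    using surv[of u 0] \<open>0 \<le> u\<close> by (simp add: BVE_surv_def algebra_simps)
  have "prob {w\<in>space M. u < Y w} = prob {w\<in>space M. 0 < X w \<and> u < Y w}"
    by (rule measure_eq_AE) (use pos in \<open>eventually_elim, auto\<close>)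
  then show "prob {w\<in>space M. u < Y w} = exp (- (m2 + m3) * u)"
    using surv[of 0 u] \<open>0 \<le> u\<close> by (simp add: BVE_surv_def algebra_simps)
qed

lemma (in prob_space) nn_integral_exp_primitive_BVE:
  fixes X Y :: "'a \<Rightarrow> real"
  assumes [measurable]: "X \<in> borel_measurable M" "Y \<in> borel_measurable M"
    and surv: "\<And>x y. 0 \<le> x \<Longrightarrow> 0 \<le> y \<Longrightarrow>
                 prob {w\<in>space M. x < X w \<and> y < Y w} = BVE_surv m1 m2 m3 x y"
    and "0 \<le> m3" "t1 < m1" "t2 < m2"
  shows "(\<integral>\<^sup>+w. ennreal (exp_primitive t1 (X w) * exp_primitive t2 (Y w)) \<partial>M)
       = ennreal ((1 / (m1 + m3 - t1) + 1 / (m2 + m3 - t2)) / (m1 + m2 + m3 - t1 - t2))"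
proof -
  have pos: "AE w in M. 0 < X w \<and> 0 < Y w"
    using surv[of 0 0] by (rule AE_BVE_pos) simp_all
  have "(\<integral>\<^sup>+w. ennreal (exp_primitive t1 (X w) * exp_primitive t2 (Y w)) \<partial>M)
      = (\<integral>\<^sup>+w. (\<integral>\<^sup>+u. ennreal (exp (t1 * u)) * indicator {0..<X w} u \<partial>lborel) *
                (\<integral>\<^sup>+v. ennreal (exp (t2 * v)) * indicator {0..<Y w} v \<partial>lborel) \<partial>M)"
    by (rule nn_integral_cong_AE)
      (use pos in \<open>eventually_elim, simp add: nn_integral_exp_Ico ennreal_mult exp_primitive_nonneg\<close>)
  also have "\<dots> = (\<integral>\<^sup>+u. \<integral>\<^sup>+v. ennreal (exp (t1 * u)) * ennreal (exp (t2 * v)) * indicator {0..} u * indicator {0..} v *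
              emeasure M {w\<in>space M. u < X w \<and> v < Y w} \<partial>lborel \<partial>lborel)"
    by (rule nn_integral_joint_tail) auto
  also have "\<dots> = (\<integral>\<^sup>+u. \<integral>\<^sup>+v. ennreal (exp ((t1 - m1) * u + (t2 - m2) * v - m3 * max u v))
              * indicator {0..} u * indicator {0..} v \<partial>lborel \<partial>lborel)"
  proof (intro nn_integral_cong)
    fix u v :: real
    have "exp (t1 * u) * exp (t2 * v) * BVE_surv m1 m2 m3 u v
        = exp ((t1 - m1) * u + (t2 - m2) * v - m3 * max u v)"
      by (simp add: BVE_surv_def mult_exp_exp algebra_simps)
    then show "ennreal (exp (t1 * u)) * ennreal (exp (t2 * v)) * indicator {0..} u * indicator {0..} v *
              emeasure M {w\<in>space M. u < X w \<and> v < Y w}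
        = ennreal (exp ((t1 - m1) * u + (t2 - m2) * v - m3 * max u v)) * indicator {0..} u * indicator {0..} v"
      using surv[of u v] by (simp add: emeasure_eq_measure indicator_def ennreal_mult'[symmetric])
  qed
  also have "\<dots> = ennreal ((1 / (m1 + m3 - t1) + 1 / (m2 + m3 - t2)) / (m1 + m2 + m3 - t1 - t2))"
    using nn_integral_quadrant_exp_minus_max[of "t1 - m1" "t2 - m2" m3] assms(4-)
    by (simp add: algebra_simps)
  finally show ?thesis .
qed

text \<open>Writing \<open>exp (t x) = 1 + t F\<^sub>t x\<close> with \<open>F\<^sub>t x = \<integral>\<^sub>0\<^sup>x exp (t u) du\<close> reduces the MGF to
  the expectations of \<open>F\<^sub>t\<^sub>1 X\<close>, \<open>F\<^sub>t\<^sub>2 Y\<close> and their product, which Tonelli turns into integrals of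
  the (joint) survival function.\<close>

lemma (in prob_space) nn_integral_exp_BVE:
  fixes X Y :: "'a \<Rightarrow> real"
  assumes [measurable]: "X \<in> borel_measurable M" "Y \<in> borel_measurable M"
    and surv: "\<And>x y. 0 \<le> x \<Longrightarrow> 0 \<le> y \<Longrightarrow>
                 prob {w\<in>space M. x < X w \<and> y < Y w} = BVE_surv m1 m2 m3 x y"
    and "0 \<le> m3" "t1 < m1" "t2 < m2"
  shows "(\<integral>\<^sup>+w. ennreal (exp (t1 * X w + t2 * Y w)) \<partial>M) = ennreal (BVE_mgf m1 m2 m3 t1 t2)"
proof -
  define J where "J = (1 / (m1 + m3 - t1) + 1 / (m2 + m3 - t2)) / (m1 + m2 + m3 - t1 - t2)"
  have pos: "AE w in M. 0 < X w \<and> 0 < Y w"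
    using surv[of 0 0] by (rule AE_BVE_pos) simp_all
  note tails = BVE_marginal_tails[OF assms(1-3)]
  have int_12: "has_bochner_integral M (\<lambda>w. exp_primitive t1 (X w) * exp_primitive t2 (Y w)) J"
    using nn_integral_exp_primitive_BVE[OF assms] pos assms(4-) unfolding J_def[symmetric]
    by (intro has_bochner_integral_nn_integral)
      (auto simp: J_def exp_primitive_nonneg intro!: add_nonneg_nonneg)
  have int_1: "has_bochner_integral M (\<lambda>w. exp_primitive t1 (X w)) (1 / (m1 + m3 - t1))"
    by (intro has_bochner_integral_nn_integral nn_integral_exp_primitive_exponential_tail tails)
      (use pos assms(4-) in \<open>auto simp: exp_primitive_nonneg\<close>)
  have int_2: "has_bochner_integral M (\<lambda>w. exp_primitive t2 (Y w)) (1 / (m2 + m3 - t2))"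
    by (intro has_bochner_integral_nn_integral nn_integral_exp_primitive_exponential_tail tails)
      (use pos assms(4-) in \<open>auto simp: exp_primitive_nonneg\<close>)
  have "exp (t1 * X w + t2 * Y w)
      = 1 + t1 * exp_primitive t1 (X w) + t2 * exp_primitive t2 (Y w)
          + t1 * t2 * (exp_primitive t1 (X w) * exp_primitive t2 (Y w))" for w
    unfolding exp_add exp_eq_1_plus_exp_primitive by (simp add: algebra_simps)
  moreover have "has_bochner_integral M (\<lambda>w. 1 + t1 * exp_primitive t1 (X w) + t2 * exp_primitive t2 (Y w)
          + t1 * t2 * (exp_primitive t1 (X w) * exp_primitive t2 (Y w)))
      (1 + t1 * (1 / (m1 + m3 - t1)) + t2 * (1 / (m2 + m3 - t2)) + t1 * t2 * J)"
    using prob_space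
    by (intro has_bochner_integral_add has_bochner_integral_mult_right int_1 int_2 int_12)
      (simp add: has_bochner_integral_iff)
  ultimately have "has_bochner_integral M (\<lambda>w. exp (t1 * X w + t2 * Y w)) (BVE_mgf m1 m2 m3 t1 t2)"
    using BVE_mgf_expansion[OF assms(4-)] by (simp add: J_def)
  then show ?thesis
    by (simp add: has_bochner_integral_iff nn_integral_eq_integral)
qed

section \<open>The matrix formula\<close>

lemma UNIV_6: "(UNIV :: 6 set) = {0, 1, 2, 3, 4, 5}"
proof -
  have "x \<in> {0, 1, 2, 3, 4, 5}" for x :: 6
  proof -
    have "Rep_bit0 x \<in> {0..<6}" using Rep_bit0[of x] by simp
    then have "Rep_bit0 x \<in> {0, 1, 2, 3, 4, 5}" by auto
    then show ?thesis
      by (auto simp: bit0.Rep_0 bit0.Rep_1 bit0.Rep_numeral Rep_bit0_inject[symmetric])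
  qed
  then show ?thesis by blast
qed

lemma sum_UNIV_6: "sum f (UNIV :: 6 set) = f 0 + f 1 + f 2 + f 3 + f 4 + f 5"
  by (subst UNIV_6) (simp add: algebra_simps)

lemma vec6_nth:
  "vec6 xs $ 0 = xs ! 0" "vec6 xs $ 1 = xs ! 1" "vec6 xs $ 2 = xs ! 2"
  "vec6 xs $ 3 = xs ! 3" "vec6 xs $ 4 = xs ! 4" "vec6 xs $ 5 = xs ! 5"
  by (simp_all add: vec6_def bit0.Rep_0 bit0.Rep_1 bit0.Rep_numeral)

lemma vec6_eq_iff:
  "x = vec6 [y0, y1, y2, y3, y4, y5] \<longleftrightarrow>
     x $ 0 = y0 \<and> x $ 1 = y1 \<and> x $ 2 = y2 \<and> x $ 3 = y3 \<and> x $ 4 = y4 \<and> x $ 5 = y5"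
proof -
  have "(\<forall>i. x $ i = vec6 [y0, y1, y2, y3, y4, y5] $ i) \<longleftrightarrow>
          (\<forall>i\<in>{0, 1, 2, 3, 4, 5}. x $ i = vec6 [y0, y1, y2, y3, y4, y5] $ i)"
    by (simp only: UNIV_6[symmetric] ball_UNIV)
  then show ?thesis by (simp add: vec_eq_iff vec6_nth)
qed

lemma vec6_eq_vec6_iff:
  "vec6 [x0, x1, x2, x3, x4, x5] = vec6 [y0, y1, y2, y3, y4, y5] \<longleftrightarrow>
     x0 = y0 \<and> x1 = y1 \<and> x2 = y2 \<and> x3 = y3 \<and> x4 = y4 \<and> x5 = y5"
  by (simp add: vec6_eq_iff vec6_nth)

lemma mmpp_R_theta: "mmpp_R *v (\<chi> i. if i = 0 then t1 else t2) = vec6 [t1 + t2, t1, t2, t1 + t2, t1, t2]"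
  unfolding vec6_eq_iff
  by (simp add: matrix_vector_mult_def UNIV_2 mmpp_R_def mat62_def vec6_nth
      bit0.Rep_0 bit0.Rep_1 bit0.Rep_numeral)

lemma mmpp_system_mult:
  "(- Delta (mmpp_R *v (\<chi> i. if i = 0 then t1 else t2)) - mmpp_D0 l1 l2 l3 w1 w2 w3 a b) *v x
   = vec6 [(l1 + l2 + l3 - t1 - t2) * x$0 - l2 * x$1 - l1 * x$2 - l3 * a * x$3,
           (l1 + l3 - t1) * x$1 - (l1 + l3) * a * x$3,
           (l2 + l3 - t2) * x$2 - (l2 + l3) * a * x$3,
           (w1 + w2 + w3 - t1 - t2) * x$3 - w2 * x$4 - w1 * x$5 - w3 * b * x$0,
           (w1 + w3 - t1) * x$4 - (w1 + w3) * b * x$0,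
           (w2 + w3 - t2) * x$5 - (w2 + w3) * b * x$0]"
  unfolding mmpp_R_theta vec6_eq_iff
  by (simp add: matrix_vector_mult_def sum_UNIV_6 Delta_def mmpp_D0_def mat66_def vec6_nth Let_def
      bit0.Rep_0 bit0.Rep_1 bit0.Rep_numeral algebra_simps)

lemma mmpp_D1_ones:
  "mmpp_D1 l1 l2 l3 w1 w2 w3 a b *v ones
   = vec6 [l3 * (1 - a), (l1 + l3) * (1 - a), (l2 + l3) * (1 - a),
           w3 * (1 - b), (w1 + w3) * (1 - b), (w2 + w3) * (1 - b)]"
  unfolding vec6_eq_iff
  by (simp add: matrix_vector_mult_def sum_UNIV_6 mmpp_D1_def mat66_def ones_def vec6_nth Let_def
      bit0.Rep_0 bit0.Rep_1 bit0.Rep_numeral)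

lemma matrix_inv_left:
  assumes "invertible (A :: 'a::semiring_1 ^ 'n ^ 'n)"
  shows "matrix_inv A ** A = mat 1"
  using assms unfolding invertible_def matrix_inv_def by (rule someI2_ex) auto

text \<open>Two of the three phases of each state are those in which only one of the two exponential
  clocks is still running; eliminating them leaves the renewal equation for the main phase.\<close>

lemma BVE_mgf_block_eq_iff:
  assumes "0 \<le> m3" "t1 < m1" "t2 < m2"
  shows "(m1 + m2 + m3 - t1 - t2) * y0 - (m2 * y1 + m1 * y2) = m3 * c
           \<and> (m1 + m3 - t1) * y1 = (m1 + m3) * c \<and> (m2 + m3 - t2) * y2 = (m2 + m3) * c
     \<longleftrightarrow> y0 = BVE_mgf m1 m2 m3 t1 t2 * c
           \<and> y1 = (m1 + m3) * c / (m1 + m3 - t1) \<and> y2 = (m2 + m3) * c / (m2 + m3 - t2)"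
proof -
  define D where "D = m1 + m2 + m3 - t1 - t2"
  have nz: "m1 + m3 - t1 \<noteq> 0" "m2 + m3 - t2 \<noteq> 0" "D \<noteq> 0"
    using assms by (auto simp: D_def)
  have "D * BVE_mgf m1 m2 m3 t1 t2
      = m2 * (m1 + m3) / (m1 + m3 - t1) + m1 * (m2 + m3) / (m2 + m3 - t2) + m3"
    using nz by (simp add: BVE_mgf_def D_def)
  then have "m2 * ((m1 + m3) * c / (m1 + m3 - t1)) + m1 * ((m2 + m3) * c / (m2 + m3 - t2))
      = (D * BVE_mgf m1 m2 m3 t1 t2 - m3) * c"
    by (simp add: algebra_simps)
  moreover have "D * y0 - (D * BVE_mgf m1 m2 m3 t1 t2 - m3) * c = m3 * c
      \<longleftrightarrow> D * (y0 - BVE_mgf m1 m2 m3 t1 t2 * c) = 0"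
    by (simp add: algebra_simps)
  ultimately have row0: "D * y0 - (m2 * y1 + m1 * y2) = m3 * c \<longleftrightarrow> y0 = BVE_mgf m1 m2 m3 t1 t2 * c"
    if "y1 = (m1 + m3) * c / (m1 + m3 - t1)" "y2 = (m2 + m3) * c / (m2 + m3 - t2)"
    using that nz by simp
  have "(m1 + m3 - t1) * y1 = (m1 + m3) * c \<longleftrightarrow> y1 = (m1 + m3) * c / (m1 + m3 - t1)"
       "(m2 + m3 - t2) * y2 = (m2 + m3) * c \<longleftrightarrow> y2 = (m2 + m3) * c / (m2 + m3 - t2)"
    using nz by (auto simp: eq_divide_eq mult.commute)
  with row0 show ?thesis
    unfolding D_def by blast
qed

lemma mmpp_system_eq_iff:
  assumes "0 \<le> l3" "0 \<le> w3" "t1 < l1" "t1 < w1" "t2 < l2" "t2 < w2"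
  shows "(- Delta (mmpp_R *v (\<chi> i. if i = 0 then t1 else t2)) - mmpp_D0 l1 l2 l3 w1 w2 w3 a b) *v x
           = vec6 [l3 * u, (l1 + l3) * u, (l2 + l3) * u, w3 * v, (w1 + w3) * v, (w2 + w3) * v]
     \<longleftrightarrow> x$0 = BVE_mgf l1 l2 l3 t1 t2 * (u + a * x$3)
         \<and> x$1 = (l1 + l3) * (u + a * x$3) / (l1 + l3 - t1)
         \<and> x$2 = (l2 + l3) * (u + a * x$3) / (l2 + l3 - t2)
         \<and> x$3 = BVE_mgf w1 w2 w3 t1 t2 * (v + b * x$0)
         \<and> x$4 = (w1 + w3) * (v + b * x$0) / (w1 + w3 - t1)
         \<and> x$5 = (w2 + w3) * (v + b * x$0) / (w2 + w3 - t2)"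
proof -
  have rows1:
    "(l1 + l2 + l3 - t1 - t2) * x$0 - l2 * x$1 - l1 * x$2 - l3 * a * x$3 = l3 * u
       \<longleftrightarrow> (l1 + l2 + l3 - t1 - t2) * x$0 - (l2 * x$1 + l1 * x$2) = l3 * (u + a * x$3)"
    "(l1 + l3 - t1) * x$1 - (l1 + l3) * a * x$3 = (l1 + l3) * u
       \<longleftrightarrow> (l1 + l3 - t1) * x$1 = (l1 + l3) * (u + a * x$3)"
    "(l2 + l3 - t2) * x$2 - (l2 + l3) * a * x$3 = (l2 + l3) * u
       \<longleftrightarrow> (l2 + l3 - t2) * x$2 = (l2 + l3) * (u + a * x$3)"
    by (auto simp: algebra_simps)
  have rows2:
    "(w1 + w2 + w3 - t1 - t2) * x$3 - w2 * x$4 - w1 * x$5 - w3 * b * x$0 = w3 * v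
       \<longleftrightarrow> (w1 + w2 + w3 - t1 - t2) * x$3 - (w2 * x$4 + w1 * x$5) = w3 * (v + b * x$0)"
    "(w1 + w3 - t1) * x$4 - (w1 + w3) * b * x$0 = (w1 + w3) * v
       \<longleftrightarrow> (w1 + w3 - t1) * x$4 = (w1 + w3) * (v + b * x$0)"
    "(w2 + w3 - t2) * x$5 - (w2 + w3) * b * x$0 = (w2 + w3) * v
       \<longleftrightarrow> (w2 + w3 - t2) * x$5 = (w2 + w3) * (v + b * x$0)"
    by (auto simp: algebra_simps)
  note blocu = BVE_mgf_block_eq_iff[of l3 t1 l1 t2 l2 "x$0" "x$1" "x$2" "u + a * x$3"]
  note blocv = BVE_mgf_block_eq_iff[of w3 t1 w1 t2 w2 "x$3" "x$4" "x$5" "v + b * x$0"]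
  show ?thesis
    unfolding mmpp_system_mult vec6_eq_vec6_iff rows1 rows2
    using blocu blocv assms by (simp only: conj_assoc[symmetric])
qed

lemma invertible_mmpp_system:
  assumes "0 \<le> l3" "0 \<le> w3" "t1 < l1" "t1 < w1" "t2 < l2" "t2 < w2"
    and "a * b * BVE_mgf l1 l2 l3 t1 t2 * BVE_mgf w1 w2 w3 t1 t2 \<noteq> 1"
  shows "invertible (- Delta (mmpp_R *v (\<chi> i. if i = 0 then t1 else t2)) - mmpp_D0 l1 l2 l3 w1 w2 w3 a b)"
    (is "invertible ?A")
proof -
  have zero: "(0 :: real ^ 6) = vec6 [l3 * 0, (l1 + l3) * 0, (l2 + l3) * 0, w3 * 0, (w1 + w3) * 0, (w2 + w3) * 0]"
    by (simp add: vec6_eq_iff)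
  have "x = 0" if "?A *v x = 0" for x
  proof -
    note x = that[unfolded zero mmpp_system_eq_iff[OF assms(1-6)], simplified add_0_left]
    have x0: "x$0 = BVE_mgf l1 l2 l3 t1 t2 * (a * x$3)" and x3: "x$3 = BVE_mgf w1 w2 w3 t1 t2 * (b * x$0)"
      using x by blast+
    have "x$0 * (1 - a * b * BVE_mgf l1 l2 l3 t1 t2 * BVE_mgf w1 w2 w3 t1 t2)
        = x$0 - BVE_mgf l1 l2 l3 t1 t2 * (a * x$3)"
      using x3 by (simp add: algebra_simps)
    also have "\<dots> = 0"
      using x0 by simp
    finally have "x$0 = 0"
      using assms(7) by simp
    with x show "x = 0"
      by (simp add: zero vec6_eq_iff)
  qed
  then show ?thesis
    unfolding invertible_left_inverse matrix_left_invertible_ker by blast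
qed

lemma mmpp_H_eq:
  assumes "0 \<le> l3" "0 \<le> w3" "t1 < l1" "t1 < w1" "t2 < l2" "t2 < w2"
    and "a * b * BVE_mgf l1 l2 l3 t1 t2 * BVE_mgf w1 w2 w3 t1 t2 \<noteq> 1"
    and "m1 = BVE_mgf l1 l2 l3 t1 t2 * ((1 - a) + a * m2)"
    and "m2 = BVE_mgf w1 w2 w3 t1 t2 * ((1 - b) + b * m1)"
  shows "mmpp_H l1 l2 l3 w1 w2 w3 a b t1 t2 = phi1 a b * m1 + phi2 a b * m2"
proof -
  define A where "A = - Delta (mmpp_R *v (\<chi> i. if i = 0 then t1 else t2)) - mmpp_D0 l1 l2 l3 w1 w2 w3 a b"
  define x where "x = vec6 [m1, (l1 + l3) * ((1 - a) + a * m2) / (l1 + l3 - t1),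
                             (l2 + l3) * ((1 - a) + a * m2) / (l2 + l3 - t2),
                             m2, (w1 + w3) * ((1 - b) + b * m1) / (w1 + w3 - t1),
                             (w2 + w3) * ((1 - b) + b * m1) / (w2 + w3 - t2)]"
  have "A *v x = mmpp_D1 l1 l2 l3 w1 w2 w3 a b *v ones"
    unfolding A_def mmpp_D1_ones mmpp_system_eq_iff[OF assms(1-6)]
    by (simp add: x_def vec6_nth flip: assms(8,9))
  then have "matrix_inv A *v (mmpp_D1 l1 l2 l3 w1 w2 w3 a b *v ones) = x"
    using invertible_mmpp_system[OF assms(1-7)] unfolding A_def[symmetric]
    by (metis matrix_inv_left matrix_vector_mul_assoc matrix_vector_mul_lid)
  then show ?thesis
    unfolding mmpp_H_def Let_def dot_lmul_matrix A_def[symmetric]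
    by (simp add: inner_vec_def sum_UNIV_6 mmpp_phi_def vec6_nth x_def)
qed

lemma measurable_mmpp_state:
  assumes [measurable]: "s0 \<in> measurable M (count_space UNIV)"
    and [measurable]: "\<And>s j. C s j \<in> measurable M (count_space UNIV)"
  shows "(\<lambda>w. mmpp_state C s0 w j) \<in> measurable M (count_space UNIV)"
proof (induction j)
  case (Suc j)
  have "(\<lambda>w. (\<lambda>s w. if C s j w then 3 - s else s) (mmpp_state C s0 w j) w) \<in> measurable M (count_space UNIV)"
    by (rule measurable_compose_countable[OF _ Suc.IH]) measurable
  then show ?case by (simp add: Let_def)
qed simp

lemma borel_measurable_first_TK:
  assumes s0: "s0 \<in> measurable M (count_space UNIV)"
    and C [measurable]: "\<And>s j. C s j \<in> measurable M (count_space UNIV)"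
    and Z: "\<And>s j. Z s j \<in> borel_measurable M"
  shows "first_TK Z C s0 \<in> borel_measurable M"
proof -
  note state = measurable_mmpp_state[OF s0 C]
  have failure: "first_failure C s0 \<in> measurable M (count_space UNIV)"
    unfolding first_failure_def[abs_def]
  proof (rule measurable_Least)
    fix j
    have "(\<lambda>w. (\<lambda>s w. \<not> C s j w) (mmpp_state C s0 w j) w) \<in> measurable M (count_space UNIV)"
      by (rule measurable_compose_countable[OF _ state]) measurable
    then show "(\<lambda>w. \<not> C (mmpp_state C s0 w j) j w) \<in> measurable M (count_space UNIV)"
      by simp
  qed
  have partial_sums: "(\<lambda>w. \<Sum>j\<le>n. Z (mmpp_state C s0 w j) j w) \<in> borel_measurable M" for n
    using Z by (intro borel_measurable_sum) (rule measurable_compose_countable[OF _ state])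
  have "(\<lambda>w. (\<lambda>n w. \<Sum>j\<le>n. Z (mmpp_state C s0 w j) j w) (first_failure C s0 w) w)
      \<in> borel_measurable M"
    using partial_sums by (rule measurable_compose_countable[OF _ failure])
  then show ?thesis
    unfolding first_TK_def[abs_def] by simp
qed

definition alt_state :: "nat \<Rightarrow> nat \<Rightarrow> nat" where
  "alt_state s j = (if even j then s else 3 - s)"

lemma alt_state_in: "s \<in> {1, 2} \<Longrightarrow> alt_state s j \<in> {1, 2}"
  by (auto simp: alt_state_def)

lemma mmpp_state_eq_alt_state:
  assumes "s0 w = s" "s \<in> {1, 2}" "\<forall>j<n. C (alt_state s j) j w" "j \<le> n"
  shows "mmpp_state C s0 w j = alt_state s j"
  using assms(4)
proof (induction j)
  case (Suc j)
  then show ?case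
    using assms(2,3) by (auto simp: Let_def alt_state_def)
qed (simp add: assms(1) alt_state_def)

lemma first_TK_eq_alt_state_sum:
  assumes "s0 w = s" "s \<in> {1, 2}" "\<forall>j<n. C (alt_state s j) j w" "\<not> C (alt_state s n) n w"
  shows "first_TK Z C s0 w = (\<Sum>j\<le>n. Z (alt_state s j) j w)"
proof -
  note state = mmpp_state_eq_alt_state[of s0 w s n C, OF assms(1-3)]
  have "first_failure C s0 w = n"
    unfolding first_failure_def
  proof (rule Least_equality)
    show "\<not> C (mmpp_state C s0 w n) n w" using state assms(4) by simp
  next
    fix j assume "\<not> C (mmpp_state C s0 w j) j w"
    then show "n \<le> j" using state assms(3) by (metis less_imp_le_nat not_le)
  qed
  then show ?thesis
    unfolding first_TK_def using state by simp
qed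

definition path_indices :: "nat \<Rightarrow> nat \<Rightarrow> mmpp_index set" where
  "path_indices s n = insert Init ((\<lambda>j. Incr (alt_state s j) j) ` {..n} \<union> (\<lambda>j. Coin (alt_state s j) j) ` {..n})"

lemma finite_path_indices: "finite (path_indices s n)"
  by (simp add: path_indices_def)

lemma path_indices_subset: "s \<in> {1, 2} \<Longrightarrow> path_indices s n \<subseteq> mmpp_indices"
  using alt_state_in unfolding path_indices_def mmpp_indices_def by blast

lemma prod_path_indices:
  "prod F (path_indices s n)
     = F Init * (\<Prod>j\<le>n. F (Incr (alt_state s j) j)) * (\<Prod>j\<le>n. F (Coin (alt_state s j) j))"
proof -
  have "inj_on (\<lambda>j. Incr (alt_state s j) j) {..n}" "inj_on (\<lambda>j. Coin (alt_state s j) j) {..n}"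
    by (auto simp: inj_on_def)
  moreover have "prod F ((\<lambda>j. Incr (alt_state s j) j) ` {..n} \<union> (\<lambda>j. Coin (alt_state s j) j) ` {..n})
      = prod F ((\<lambda>j. Incr (alt_state s j) j) ` {..n}) * prod F ((\<lambda>j. Coin (alt_state s j) j) ` {..n})"
    by (rule prod.union_disjoint) auto
  ultimately show ?thesis
    unfolding path_indices_def by (subst prod.insert) (auto simp: prod.reindex mult.assoc)
qed

lemma gen_sets_comp_subset:
  assumes "X \<in> measurable M N" "f \<in> measurable N K"
  shows "gen_sets M (\<lambda>w. f (X w)) K \<subseteq> gen_sets M X N"
proof
  fix A assume "A \<in> gen_sets M (\<lambda>w. f (X w)) K"
  then obtain B where "B \<in> sets K" "A = (\<lambda>w. f (X w)) -` B \<inter> space M"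
    by (auto simp: gen_sets_def)
  moreover have "f -` B \<inter> space N \<in> sets N"
    using assms(2) \<open>B \<in> sets K\<close> by (rule measurable_sets)
  ultimately show "A \<in> gen_sets M X N"
    using measurable_space[OF assms(1)]
    unfolding gen_sets_def by (auto intro!: exI[of _ "f -` B \<inter> space N"])
qed

lemma sums_if_pair_sums_nonneg:
  fixes f :: "nat \<Rightarrow> real"
  assumes nonneg: "\<And>n. 0 \<le> f n" and pairs: "(\<lambda>k. f (2 * k) + f (2 * k + 1)) sums S"
  shows "f sums S"
proof -
  define P where "P n = (\<Sum>i<n. f i)" for n
  have even: "P (2 * k) = (\<Sum>i<k. f (2 * i) + f (2 * i + 1))" for k
    by (induction k) (simp_all add: P_def)
  then have "(\<lambda>k. P (2 * k)) \<longlonglongrightarrow> S"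
    using pairs unfolding sums_def by simp
  moreover have "(\<lambda>k. f (2 * k)) \<longlonglongrightarrow> 0"
  proof (rule tendsto_sandwich[where f="\<lambda>_. 0" and h="\<lambda>k. f (2 * k) + f (2 * k + 1)"])
    show "(\<lambda>k. f (2 * k) + f (2 * k + 1)) \<longlonglongrightarrow> 0"
      using pairs sums_summable summable_LIMSEQ_zero by blast
  qed (use nonneg in auto)
  ultimately have "(\<lambda>k. P (2 * k) + f (2 * k)) \<longlonglongrightarrow> S + 0"
    by (rule tendsto_add)
  then have "(\<lambda>k. P (2 * k + 1)) \<longlonglongrightarrow> S"
    by (simp add: P_def)
  with \<open>(\<lambda>k. P (2 * k)) \<longlonglongrightarrow> S\<close> have "P \<longlonglongrightarrow> S"
    by (rule limseq_even_odd)
  then show ?thesis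
    unfolding sums_def P_def .
qed

locale bivariate_mmpp2 = prob_space M for M :: "'a measure" +
  fixes l1 l2 l3 w1 w2 w3 a b :: real
    and s0 :: "'a \<Rightarrow> nat"
    and Z :: "nat \<Rightarrow> nat \<Rightarrow> 'a \<Rightarrow> real \<times> real"
    and C :: "nat \<Rightarrow> nat \<Rightarrow> 'a \<Rightarrow> bool"
  assumes rates: "l1 > 0" "l2 > 0" "l3 \<ge> 0" "w1 > 0" "w2 > 0" "w3 \<ge> 0"
    and switch_range: "0 \<le> a" "a \<le> 1" "0 \<le> b" "b \<le> 1"
    and phi_denominator: "b * (1 - a) + a * (1 - b) \<noteq> 0"
    and s0_measurable [measurable]: "s0 \<in> measurable M (count_space UNIV)"
    and Z_measurable: "\<And>s j. Z s j \<in> borel_measurable M"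
    and C_measurable [measurable]: "\<And>s j. C s j \<in> measurable M (count_space UNIV)"
    and s0_range: "\<forall>w\<in>space M. s0 w \<in> {1, 2}"
    and prob_s0: "prob {w \<in> space M. s0 w = 1} = phi1 a b"
    and surv_Z1: "\<And>j x y. 0 \<le> x \<Longrightarrow> 0 \<le> y \<Longrightarrow>
           prob {w \<in> space M. x < fst (Z 1 j w) \<and> y < snd (Z 1 j w)} = BVE_surv l1 l2 l3 x y"
    and surv_Z2: "\<And>j x y. 0 \<le> x \<Longrightarrow> 0 \<le> y \<Longrightarrow>
           prob {w \<in> space M. x < fst (Z 2 j w) \<and> y < snd (Z 2 j w)} = BVE_surv w1 w2 w3 x y"
    and prob_C1: "\<And>j. prob {w \<in> space M. C 1 j w} = a"
    and prob_C2: "\<And>j. prob {w \<in> space M. C 2 j w} = b"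
    and indep: "indep_sets
           (\<lambda>i. case i of
                  Init \<Rightarrow> gen_sets M s0 (count_space UNIV)
                | Incr s j \<Rightarrow> gen_sets M (Z s j) borel
                | Coin s j \<Rightarrow> gen_sets M (C s j) (count_space UNIV))
           mmpp_indices"
begin

definition switch_prob :: "nat \<Rightarrow> real" where
  "switch_prob s = (if s = 1 then a else b)"

definition incr_mgf :: "real \<Rightarrow> real \<Rightarrow> nat \<Rightarrow> real" where
  "incr_mgf t1 t2 s = (if s = 1 then BVE_mgf l1 l2 l3 t1 t2 else BVE_mgf w1 w2 w3 t1 t2)"

definition init_prob :: "nat \<Rightarrow> real" where
  "init_prob s = prob {w \<in> space M. s0 w = s}"

definition mgf_domain :: "real \<Rightarrow> real \<Rightarrow> bool" where
  "mgf_domain t1 t2 \<longleftrightarrow> t1 < l1 \<and> t1 < w1 \<and> t2 < l2 \<and> t2 < w2"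

definition exp_TK :: "real \<Rightarrow> real \<Rightarrow> 'a \<Rightarrow> real" where
  "exp_TK t1 t2 w = exp (fst (first_TK Z C s0 w) * t1 + snd (first_TK Z C s0 w) * t2)"

definition failure_at :: "nat \<Rightarrow> nat \<Rightarrow> 'a set" where
  "failure_at s n = {w \<in> space M. s0 w = s \<and> (\<forall>j\<le>n. C (alt_state s j) j w \<longleftrightarrow> j < n)}"

definition path_factor :: "real \<Rightarrow> real \<Rightarrow> nat \<Rightarrow> nat \<Rightarrow> mmpp_index \<Rightarrow> 'a \<Rightarrow> real" where
  "path_factor t1 t2 s n i w = (case i of
      Init \<Rightarrow> of_bool (s0 w = s)
    | Incr s' j \<Rightarrow> exp (t1 * fst (Z s' j w) + t2 * snd (Z s' j w))
    | Coin s' j \<Rightarrow> of_bool (C s' j w \<longleftrightarrow> j < n))"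

lemma Z_measurable_pair [measurable]: "Z s j \<in> measurable M (borel \<Otimes>\<^sub>M borel)"
  using Z_measurable by (simp add: borel_prod)

lemma borel_measurable_exp_TK [measurable]: "exp_TK t1 t2 \<in> borel_measurable M"
proof -
  have "first_TK Z C s0 \<in> measurable M (borel \<Otimes>\<^sub>M borel)"
    using borel_measurable_first_TK[OF s0_measurable C_measurable Z_measurable] by (simp add: borel_prod)
  then show ?thesis
    unfolding exp_TK_def[abs_def] by measurable
qed

lemma failure_at_sets [measurable]: "failure_at s n \<in> sets M"
  unfolding failure_at_def by measurable

lemma switch_prob_range: "0 \<le> switch_prob s" "switch_prob s \<le> 1"
  using switch_range by (auto simp: switch_prob_def)

lemma incr_mgf_pos: "mgf_domain t1 t2 \<Longrightarrow> 0 < incr_mgf t1 t2 s"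
  using BVE_mgf_pos[of l1 l2 l3 t1 t2] BVE_mgf_pos[of w1 w2 w3 t1 t2] rates
  by (auto simp: incr_mgf_def mgf_domain_def)

lemma nn_integral_exp_Z:
  assumes "s \<in> {1, 2}" "mgf_domain t1 t2"
  shows "(\<integral>\<^sup>+w. ennreal (exp (t1 * fst (Z s j w) + t2 * snd (Z s j w))) \<partial>M) = ennreal (incr_mgf t1 t2 s)"
  using assms surv_Z1 surv_Z2 rates
  by (auto simp: incr_mgf_def mgf_domain_def intro!: nn_integral_exp_BVE)

lemma borel_measurable_path_factor [measurable]: "path_factor t1 t2 s n i \<in> borel_measurable M"
  by (cases i) (simp_all add: path_factor_def[abs_def])

lemma path_factor_nonneg: "0 \<le> path_factor t1 t2 s n i w"
  by (cases i) (simp_all add: path_factor_def)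

lemma indep_path_factors:
  assumes "s \<in> {1, 2}"
  shows "indep_vars (\<lambda>_. borel) (path_factor t1 t2 s n) (path_indices s n)"
  unfolding indep_vars_def2
proof
  show "\<forall>i\<in>path_indices s n. random_variable borel (path_factor t1 t2 s n i)"
    by simp
  show "indep_sets (\<lambda>i. {path_factor t1 t2 s n i -` A \<inter> space M | A. A \<in> sets borel}) (path_indices s n)"
  proof (rule indep_sets_mono_sets[OF indep_sets_mono_index[OF path_indices_subset[OF assms] indep]])
    fix i
    have "gen_sets M (path_factor t1 t2 s n i) borel \<subseteq> (case i of
        Init \<Rightarrow> gen_sets M s0 (count_space UNIV)
      | Incr s j \<Rightarrow> gen_sets M (Z s j) borel
      | Coin s j \<Rightarrow> gen_sets M (C s j) (count_space UNIV))"
    proof (cases i)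
      case Init
      then show ?thesis
        using gen_sets_comp_subset[of s0 M "count_space UNIV" "\<lambda>k. of_bool (k = s)" borel]
        by (simp add: path_factor_def[abs_def])
    next
      case (Incr s' j)
      have "(\<lambda>z :: real \<times> real. exp (t1 * fst z + t2 * snd z)) \<in> borel_measurable borel"
        by (intro borel_measurable_continuous_onI continuous_intros)
      with Incr show ?thesis
        using gen_sets_comp_subset[of "Z s' j" M borel "\<lambda>z. exp (t1 * fst z + t2 * snd z)" borel]
        by (simp add: path_factor_def[abs_def] Z_measurable)
    next
      case (Coin s' j)
      then show ?thesis
        using gen_sets_comp_subset[of "C s' j" M "count_space UNIV" "\<lambda>c. of_bool (c \<longleftrightarrow> j < n)" borel]
        by (simp add: path_factor_def[abs_def])
    qed
    then show "{path_factor t1 t2 s n i -` A \<inter> space M | A. A \<in> sets borel} \<subseteq> (case i of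
        Init \<Rightarrow> gen_sets M s0 (count_space UNIV)
      | Incr s j \<Rightarrow> gen_sets M (Z s j) borel
      | Coin s j \<Rightarrow> gen_sets M (C s j) (count_space UNIV))"
      by (simp add: gen_sets_def)
  qed
qed

lemma exp_TK_failure_at:
  assumes "s \<in> {1, 2}" "w \<in> failure_at s n"
  shows "exp_TK t1 t2 w = (\<Prod>j\<le>n. exp (t1 * fst (Z (alt_state s j) j w) + t2 * snd (Z (alt_state s j) j w)))"
proof -
  have "first_TK Z C s0 w = (\<Sum>j\<le>n. Z (alt_state s j) j w)"
    using assms by (intro first_TK_eq_alt_state_sum) (auto simp: failure_at_def)
  then have "fst (first_TK Z C s0 w) * t1 + snd (first_TK Z C s0 w) * t2
      = (\<Sum>j\<le>n. t1 * fst (Z (alt_state s j) j w) + t2 * snd (Z (alt_state s j) j w))"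
    by (simp add: fst_sum snd_sum sum.distrib sum_distrib_left sum_distrib_right mult.commute)
  then show ?thesis
    unfolding exp_TK_def by (simp add: exp_sum)
qed

lemma indicator_failure_at_mult_exp_TK:
  assumes "s \<in> {1, 2}" "w \<in> space M"
  shows "indicator (failure_at s n) w * exp_TK t1 t2 w = (\<Prod>i\<in>path_indices s n. path_factor t1 t2 s n i w)"
proof -
  have coins: "(\<Prod>j\<le>n. of_bool (C (alt_state s j) j w \<longleftrightarrow> j < n) :: real)
      = of_bool (\<forall>j\<le>n. C (alt_state s j) j w \<longleftrightarrow> j < n)"
  proof (cases "\<forall>j\<le>n. C (alt_state s j) j w \<longleftrightarrow> j < n")
    case True
    then show ?thesis by (simp add: prod.neutral)
  next
    case False
    then obtain j where "j \<le> n" "\<not> (C (alt_state s j) j w \<longleftrightarrow> j < n)" by blast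
    then show ?thesis using False by (simp add: prod_zero_iff) blast
  qed
  have "(\<Prod>i\<in>path_indices s n. path_factor t1 t2 s n i w)
      = of_bool (w \<in> failure_at s n)
        * (\<Prod>j\<le>n. exp (t1 * fst (Z (alt_state s j) j w) + t2 * snd (Z (alt_state s j) j w)))"
    using assms(2) by (simp add: prod_path_indices path_factor_def coins failure_at_def)
  then show ?thesis
    using exp_TK_failure_at[OF assms(1)] by (cases "w \<in> failure_at s n") simp_all
qed

lemma nn_integral_init_factor: "(\<integral>\<^sup>+w. ennreal (of_bool (s0 w = s)) \<partial>M) = ennreal (init_prob s)"
proof -
  have "(\<integral>\<^sup>+w. ennreal (of_bool (s0 w = s)) \<partial>M) = (\<integral>\<^sup>+w. indicator {w\<in>space M. s0 w = s} w \<partial>M)"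
    by (rule nn_integral_cong) (simp add: indicator_def)
  then show ?thesis
    by (simp add: init_prob_def emeasure_eq_measure)
qed

lemma nn_integral_coin_factor:
  assumes "s \<in> {1, 2}"
  shows "(\<integral>\<^sup>+w. ennreal (of_bool (C s j w \<longleftrightarrow> j < n)) \<partial>M)
       = ennreal (if j < n then switch_prob s else 1 - switch_prob s)"
proof -
  have switch: "prob {w\<in>space M. C s j w} = switch_prob s"
    using assms prob_C1 prob_C2 by (auto simp: switch_prob_def)
  have "(\<integral>\<^sup>+w. ennreal (of_bool (C s j w \<longleftrightarrow> j < n)) \<partial>M)
      = (\<integral>\<^sup>+w. indicator {w\<in>space M. C s j w \<longleftrightarrow> j < n} w \<partial>M)"
    by (rule nn_integral_cong) (simp add: indicator_def)
  also have "\<dots> = ennreal (prob {w\<in>space M. C s j w \<longleftrightarrow> j < n})"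
    by (simp add: emeasure_eq_measure)
  also have "prob {w\<in>space M. C s j w \<longleftrightarrow> j < n} = (if j < n then switch_prob s else 1 - switch_prob s)"
  proof (cases "j < n")
    case False
    then have "{w\<in>space M. C s j w \<longleftrightarrow> j < n} = space M - {w\<in>space M. C s j w}"
      by auto
    then show ?thesis
      using False switch by (simp add: prob_compl)
  qed (simp add: switch)
  finally show ?thesis .
qed

definition failure_term :: "real \<Rightarrow> real \<Rightarrow> nat \<Rightarrow> nat \<Rightarrow> real" where
  "failure_term t1 t2 s n = init_prob s
     * (\<Prod>j<n. switch_prob (alt_state s j) * incr_mgf t1 t2 (alt_state s j))
     * ((1 - switch_prob (alt_state s n)) * incr_mgf t1 t2 (alt_state s n))"

lemma failure_term_nonneg: "mgf_domain t1 t2 \<Longrightarrow> 0 \<le> failure_term t1 t2 s n"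
  unfolding failure_term_def using switch_prob_range incr_mgf_pos
  by (intro mult_nonneg_nonneg prod_nonneg) (auto simp: init_prob_def less_imp_le)

lemma nn_integral_failure_at:
  assumes "s \<in> {1, 2}" "mgf_domain t1 t2"
  shows "(\<integral>\<^sup>+w. ennreal (exp_TK t1 t2 w) * indicator (failure_at s n) w \<partial>M) = ennreal (failure_term t1 t2 s n)"
proof -
  note alt = alt_state_in[OF assms(1)]
  have "(\<integral>\<^sup>+w. ennreal (exp_TK t1 t2 w) * indicator (failure_at s n) w \<partial>M)
      = (\<integral>\<^sup>+w. (\<Prod>i\<in>path_indices s n. ennreal (path_factor t1 t2 s n i w)) \<partial>M)"
  proof (rule nn_integral_cong)
    fix w assume "w \<in> space M"
    have "ennreal (exp_TK t1 t2 w) * indicator (failure_at s n) w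
        = ennreal (indicator (failure_at s n) w * exp_TK t1 t2 w)"
      by (simp add: indicator_def)
    then show "ennreal (exp_TK t1 t2 w) * indicator (failure_at s n) w
        = (\<Prod>i\<in>path_indices s n. ennreal (path_factor t1 t2 s n i w))"
      using indicator_failure_at_mult_exp_TK[OF assms(1) \<open>w \<in> space M\<close>]
      by (simp add: prod_ennreal path_factor_nonneg)
  qed
  also have "\<dots> = (\<Prod>i\<in>path_indices s n. \<integral>\<^sup>+w. ennreal (path_factor t1 t2 s n i w) \<partial>M)"
    using indep_vars_compose2[OF indep_path_factors[OF assms(1)], where Y="\<lambda>_. ennreal" and N="\<lambda>_. borel"]
    by (intro indep_vars_nn_integral) (auto simp: finite_path_indices)
  also have "\<dots> = ennreal (init_prob s)
      * (\<Prod>j\<le>n. ennreal (incr_mgf t1 t2 (alt_state s j)))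
      * (\<Prod>j\<le>n. ennreal (if j < n then switch_prob (alt_state s j) else 1 - switch_prob (alt_state s j)))"
    using nn_integral_exp_Z[OF alt assms(2)] nn_integral_coin_factor[OF alt]
    by (simp add: prod_path_indices path_factor_def nn_integral_init_factor)
  also have "\<dots> = ennreal (failure_term t1 t2 s n)"
    using switch_prob_range incr_mgf_pos[OF assms(2)]
    by (simp add: failure_term_def prod_ennreal ennreal_mult prod_nonneg init_prob_def less_imp_le
        lessThan_Suc_atMost[symmetric] prod.distrib mult_ac)
  finally show ?thesis .
qed


definition cycle_factor :: "real \<Rightarrow> real \<Rightarrow> real" where
  "cycle_factor t1 t2 = a * b * incr_mgf t1 t2 1 * incr_mgf t1 t2 2"

text \<open>The conditional MGF of \<open>A\<close> given \<open>s\<^sub>0 = s\<close>: after a geometric number of complete cycles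
  \<open>s, 3 - s\<close>, the failure happens in the first or in the second step of a cycle.\<close>

definition cond_mgf :: "real \<Rightarrow> real \<Rightarrow> nat \<Rightarrow> real" where
  "cond_mgf t1 t2 s =
     ((1 - switch_prob s) * incr_mgf t1 t2 s
      + switch_prob s * incr_mgf t1 t2 s * ((1 - switch_prob (3 - s)) * incr_mgf t1 t2 (3 - s)))
     / (1 - cycle_factor t1 t2)"

lemma failure_term_sums:
  assumes "s \<in> {1, 2}" "mgf_domain t1 t2" "cycle_factor t1 t2 < 1"
  shows "failure_term t1 t2 s sums (init_prob s * cond_mgf t1 t2 s)"
proof -
  define h where "h s' = switch_prob s' * incr_mgf t1 t2 s'" for s'
  define c where "c = (1 - switch_prob s) * incr_mgf t1 t2 s
      + h s * ((1 - switch_prob (3 - s)) * incr_mgf t1 t2 (3 - s))"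
  have Q: "h s * h (3 - s) = cycle_factor t1 t2"
    using assms(1) by (auto simp: h_def cycle_factor_def switch_prob_def)
  have "0 \<le> h s'" for s'
    using switch_prob_range incr_mgf_pos[OF assms(2)] by (simp add: h_def less_imp_le)
  then have "0 \<le> cycle_factor t1 t2"
    by (simp flip: Q)
  have alt: "alt_state s (2 * k) = s" "alt_state s (Suc (2 * k)) = 3 - s" for k
    by (simp_all add: alt_state_def)
  have cycles: "(\<Prod>j<2 * k. h (alt_state s j)) = cycle_factor t1 t2 ^ k" for k
  proof (induction k)
    case (Suc k)
    have "(\<Prod>j<2 * Suc k. h (alt_state s j))
        = (\<Prod>j<2 * k. h (alt_state s j)) * (h (alt_state s (2 * k)) * h (alt_state s (2 * k + 1)))"
      by (simp add: mult.assoc)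
    then show ?case
      by (simp add: Suc.IH alt Q)
  qed simp
  have pair: "failure_term t1 t2 s (2 * k) + failure_term t1 t2 s (2 * k + 1)
      = (init_prob s * c) * cycle_factor t1 t2 ^ k" for k
  proof -
    have "failure_term t1 t2 s (2 * k)
        = init_prob s * cycle_factor t1 t2 ^ k * ((1 - switch_prob s) * incr_mgf t1 t2 s)"
      by (simp add: failure_term_def h_def[symmetric] cycles alt)
    moreover have "failure_term t1 t2 s (Suc (2 * k))
        = init_prob s * (cycle_factor t1 t2 ^ k * h s) * ((1 - switch_prob (3 - s)) * incr_mgf t1 t2 (3 - s))"
      by (simp add: failure_term_def h_def[symmetric] cycles alt)
    ultimately show ?thesis
      by (simp add: c_def algebra_simps)
  qed
  have "(\<lambda>k. (init_prob s * c) * cycle_factor t1 t2 ^ k) sums (init_prob s * c / (1 - cycle_factor t1 t2))"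
    using sums_mult[OF geometric_sums, of "cycle_factor t1 t2" "init_prob s * c"]
      \<open>0 \<le> cycle_factor t1 t2\<close> assms(3) by simp
  then have "failure_term t1 t2 s sums (init_prob s * c / (1 - cycle_factor t1 t2))"
    unfolding pair[symmetric] by (rule sums_if_pair_sums_nonneg[OF failure_term_nonneg[OF assms(2)]])
  then show ?thesis
    by (simp add: cond_mgf_def c_def h_def)
qed

lemma cond_mgf_nonneg:
  assumes "mgf_domain t1 t2" "cycle_factor t1 t2 < 1"
  shows "0 \<le> cond_mgf t1 t2 s"
  unfolding cond_mgf_def using assms switch_prob_range incr_mgf_pos[OF assms(1)]
  by (intro divide_nonneg_pos add_nonneg_nonneg mult_nonneg_nonneg) (auto simp: less_imp_le)

definition failure_occurs :: "'a set" where
  "failure_occurs = (\<Union>n. failure_at 1 n) \<union> (\<Union>n. failure_at 2 n)"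

lemma failure_occurs_sets [measurable]: "failure_occurs \<in> sets M"
  unfolding failure_occurs_def by measurable

lemma disjoint_family_failure_at: "disjoint_family (failure_at s)"
  unfolding disjoint_family_on_def
proof (intro ballI impI)
  fix m n :: nat
  assume "m \<noteq> n"
  then consider "m < n" | "n < m" by linarith
  then show "failure_at s m \<inter> failure_at s n = {}"
    by cases (auto simp: failure_at_def)
qed

lemma nn_integral_exp_TK_failure_occurs:
  assumes "mgf_domain t1 t2" "cycle_factor t1 t2 < 1"
  shows "(\<integral>\<^sup>+w. ennreal (exp_TK t1 t2 w) * indicator failure_occurs w \<partial>M)
       = ennreal (init_prob 1 * cond_mgf t1 t2 1 + init_prob 2 * cond_mgf t1 t2 2)"
proof -
  have sums: "(\<Sum>n. \<integral>\<^sup>+w. ennreal (exp_TK t1 t2 w) * indicator (failure_at s n) w \<partial>M)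
      = ennreal (init_prob s * cond_mgf t1 t2 s)" if "s \<in> {1, 2}" for s
    using failure_term_sums[OF that assms] nn_integral_failure_at[OF that assms(1)]
      failure_term_nonneg[OF assms(1)]
    by (simp add: suminf_ennreal2 sums_summable sums_unique[symmetric])
  have "indicator failure_occurs w
      = (\<Sum>n. indicator (failure_at 1 n) w) + (\<Sum>n. indicator (failure_at 2 n) w :: ennreal)" for w
  proof -
    have "(\<Union>n. failure_at 1 n) \<inter> (\<Union>n. failure_at 2 n) = {}"
      by (auto simp: failure_at_def)
    then show ?thesis
      unfolding failure_occurs_def suminf_indicator[OF disjoint_family_failure_at] by (auto simp: indicator_def)
  qed
  then have "(\<integral>\<^sup>+w. ennreal (exp_TK t1 t2 w) * indicator failure_occurs w \<partial>M)
      = (\<integral>\<^sup>+w. (\<Sum>n. ennreal (exp_TK t1 t2 w) * indicator (failure_at 1 n) w)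
               + (\<Sum>n. ennreal (exp_TK t1 t2 w) * indicator (failure_at 2 n) w) \<partial>M)"
    by (simp add: distrib_left ennreal_suminf_cmult)
  also have "\<dots> = (\<integral>\<^sup>+w. (\<Sum>n. ennreal (exp_TK t1 t2 w) * indicator (failure_at 1 n) w) \<partial>M)
                + (\<integral>\<^sup>+w. (\<Sum>n. ennreal (exp_TK t1 t2 w) * indicator (failure_at 2 n) w) \<partial>M)"
    by (rule nn_integral_add) measurable
  also have "\<dots> = (\<Sum>n. \<integral>\<^sup>+w. ennreal (exp_TK t1 t2 w) * indicator (failure_at 1 n) w \<partial>M)
                + (\<Sum>n. \<integral>\<^sup>+w. ennreal (exp_TK t1 t2 w) * indicator (failure_at 2 n) w \<partial>M)"
    by (subst (1 2) nn_integral_suminf) measurable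
  also have "\<dots> = ennreal (init_prob 1 * cond_mgf t1 t2 1 + init_prob 2 * cond_mgf t1 t2 2)"
    using cond_mgf_nonneg[OF assms] by (simp add: sums ennreal_plus init_prob_def)
  finally show ?thesis .
qed

lemma ab_less_1: "a * b < 1"
proof (rule ccontr)
  assume "\<not> a * b < 1"
  moreover have "a * b \<le> a" "a * b \<le> b"
    using switch_range by (simp_all add: mult_left_le mult_left_le_one_le)
  ultimately have "a = 1" "b = 1"
    using switch_range by auto
  then show False
    using phi_denominator by simp
qed

lemma init_prob_sum: "init_prob 1 + init_prob 2 = 1"
proof -
  have "space M = {w\<in>space M. s0 w = 1} \<union> {w\<in>space M. s0 w = 2}"
    using s0_range by auto
  moreover have "prob ({w\<in>space M. s0 w = 1} \<union> {w\<in>space M. s0 w = 2}) = init_prob 1 + init_prob 2"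
    unfolding init_prob_def by (rule finite_measure_Union) auto
  ultimately show ?thesis
    by (simp add: prob_space)
qed

lemma init_prob_eq_phi: "init_prob 1 = phi1 a b" "init_prob 2 = phi2 a b"
proof -
  show "init_prob 1 = phi1 a b"
    using prob_s0 by (simp add: init_prob_def)
  moreover have "phi1 a b + phi2 a b = 1"
    using phi_denominator by (simp add: phi1_def phi2_def add_divide_distrib[symmetric])
  ultimately show "init_prob 2 = phi2 a b"
    using init_prob_sum by simp
qed

lemma incr_mgf_0_0: "incr_mgf 0 0 s = 1"
  using rates by (simp add: incr_mgf_def BVE_mgf_0_0)

text \<open>At \<open>\<theta> = 0\<close> the series sums to \<open>P(s\<^sub>0 = 1) + P(s\<^sub>0 = 2) = 1\<close>, so a failure occurs almost
  surely.\<close>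

lemma AE_failure_occurs: "AE w in M. w \<in> failure_occurs"
proof -
  have domain: "mgf_domain 0 0" and cycle: "cycle_factor 0 0 < 1"
    using rates ab_less_1 by (simp_all add: mgf_domain_def cycle_factor_def incr_mgf_0_0)
  have "cond_mgf 0 0 s = 1" if "s \<in> {1, 2}" for s
    using that ab_less_1
    by (auto simp: cond_mgf_def cycle_factor_def incr_mgf_0_0 switch_prob_def field_simps)
  then have "emeasure M failure_occurs = ennreal (init_prob 1 + init_prob 2)"
    using nn_integral_exp_TK_failure_occurs[OF domain cycle]
    by (simp add: exp_TK_def nn_integral_indicator)
  then have "prob failure_occurs = 1"
    unfolding init_prob_sum by (simp add: emeasure_eq_measure)
  then show ?thesis
    by (rule AE_prob_1[THEN AE_mp]) simp
qed

lemma has_bochner_integral_exp_TK: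
  assumes "mgf_domain t1 t2" "cycle_factor t1 t2 < 1"
  shows "has_bochner_integral M (exp_TK t1 t2) (init_prob 1 * cond_mgf t1 t2 1 + init_prob 2 * cond_mgf t1 t2 2)"
proof (rule has_bochner_integral_nn_integral)
  have "(\<integral>\<^sup>+w. ennreal (exp_TK t1 t2 w) \<partial>M) = (\<integral>\<^sup>+w. ennreal (exp_TK t1 t2 w) * indicator failure_occurs w \<partial>M)"
    by (rule nn_integral_cong_AE) (use AE_failure_occurs in \<open>eventually_elim, simp\<close>)
  then show "(\<integral>\<^sup>+w. ennreal (exp_TK t1 t2 w) \<partial>M)
      = ennreal (init_prob 1 * cond_mgf t1 t2 1 + init_prob 2 * cond_mgf t1 t2 2)"
    using nn_integral_exp_TK_failure_occurs[OF assms] by simp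
  show "0 \<le> init_prob 1 * cond_mgf t1 t2 1 + init_prob 2 * cond_mgf t1 t2 2"
    using cond_mgf_nonneg[OF assms] by (simp add: init_prob_def)
qed (simp_all add: exp_TK_def)

lemma cond_mgf_renewal:
  assumes "cycle_factor t1 t2 \<noteq> 1"
  shows "cond_mgf t1 t2 1 = incr_mgf t1 t2 1 * ((1 - a) + a * cond_mgf t1 t2 2)"
    and "cond_mgf t1 t2 2 = incr_mgf t1 t2 2 * ((1 - b) + b * cond_mgf t1 t2 1)"
proof -
  have "1 - cycle_factor t1 t2 \<noteq> 0"
    using assms by simp
  then show "cond_mgf t1 t2 1 = incr_mgf t1 t2 1 * ((1 - a) + a * cond_mgf t1 t2 2)"
      and "cond_mgf t1 t2 2 = incr_mgf t1 t2 2 * ((1 - b) + b * cond_mgf t1 t2 1)"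
    by (simp_all add: cond_mgf_def switch_prob_def cycle_factor_def field_simps)
qed

lemma has_bochner_integral_exp_TK_mmpp_H:
  assumes "mgf_domain t1 t2" "cycle_factor t1 t2 < 1"
  shows "has_bochner_integral M (exp_TK t1 t2) (mmpp_H l1 l2 l3 w1 w2 w3 a b t1 t2)"
proof -
  have "mmpp_H l1 l2 l3 w1 w2 w3 a b t1 t2 = phi1 a b * cond_mgf t1 t2 1 + phi2 a b * cond_mgf t1 t2 2"
    using rates assms cond_mgf_renewal[of t1 t2]
    by (intro mmpp_H_eq) (auto simp: mgf_domain_def cycle_factor_def incr_mgf_def)
  then show ?thesis
    using has_bochner_integral_exp_TK[OF assms, unfolded init_prob_eq_phi] by simp
qed

lemma AE_Z_pos:
  assumes "s \<in> {1, 2}"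
  shows "AE w in M. 0 < fst (Z s j w) \<and> 0 < snd (Z s j w)"
proof -
  have "prob {w\<in>space M. 0 < fst (Z s j w) \<and> 0 < snd (Z s j w)} = 1"
    using assms surv_Z1[of 0 0 j] surv_Z2[of 0 0 j] by (auto simp: BVE_surv_def)
  then show ?thesis
    by (rule AE_prob_1[THEN AE_mp]) simp
qed

text \<open>Monotonicity of the closed form is read off from its integral representation, the
  increments being almost surely positive.\<close>

lemma incr_mgf_mono:
  assumes "s \<in> {1, 2}" "t1 \<le> K" "t2 \<le> K" "mgf_domain K K"
  shows "incr_mgf t1 t2 s \<le> incr_mgf K K s"
proof -
  have "mgf_domain t1 t2"
    using assms by (auto simp: mgf_domain_def)
  then have "ennreal (incr_mgf t1 t2 s) = (\<integral>\<^sup>+w. ennreal (exp (t1 * fst (Z s 0 w) + t2 * snd (Z s 0 w))) \<partial>M)"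
    using nn_integral_exp_Z[OF assms(1)] by simp
  also have "\<dots> \<le> (\<integral>\<^sup>+w. ennreal (exp (K * fst (Z s 0 w) + K * snd (Z s 0 w))) \<partial>M)"
    using AE_Z_pos[OF assms(1), of 0]
  proof (intro nn_integral_mono_AE, eventually_elim)
    case (elim w)
    then have "t1 * fst (Z s 0 w) + t2 * snd (Z s 0 w) \<le> K * fst (Z s 0 w) + K * snd (Z s 0 w)"
      using assms(2,3) by (intro add_mono mult_right_mono) auto
    then show ?case
      by (intro ennreal_leI) simp
  qed
  also have "\<dots> = ennreal (incr_mgf K K s)"
    using nn_integral_exp_Z[OF assms(1,4)] by simp
  finally show ?thesis
    using incr_mgf_pos[OF assms(4), THEN less_imp_le] by (simp add: ennreal_le_iff)
qed

lemma cycle_factor_mono: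
  assumes "t1 \<le> K" "t2 \<le> K" "mgf_domain K K"
  shows "cycle_factor t1 t2 \<le> cycle_factor K K"
proof -
  have "mgf_domain t1 t2"
    using assms by (auto simp: mgf_domain_def)
  then show ?thesis
    unfolding cycle_factor_def using switch_range assms(3) incr_mgf_pos incr_mgf_mono[OF _ assms]
    by (intro mult_mono mult_nonneg_nonneg) (auto simp: less_imp_le)
qed

lemma exists_mgf_radius: "\<exists>K>0. mgf_domain K K \<and> cycle_factor K K < 1"
proof -
  have "isCont (\<lambda>x. cycle_factor x x) 0"
    unfolding cycle_factor_def incr_mgf_def BVE_mgf_def using rates
    by (intro continuous_intros) auto
  moreover have "cycle_factor 0 0 < 1"
    using ab_less_1 by (simp add: cycle_factor_def incr_mgf_0_0)
  ultimately have "\<forall>\<^sub>F x in at 0. cycle_factor x x < 1"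
    using isCont_def order_tendstoD(2) by blast
  then obtain d where "0 < d" and d: "\<And>x. x \<noteq> 0 \<Longrightarrow> dist x 0 < d \<Longrightarrow> cycle_factor x x < 1"
    unfolding eventually_at by auto
  define K where "K = min d (min (min l1 l2) (min w1 w2)) / 2"
  have "0 < K" "K < d" "mgf_domain K K"
    using rates \<open>0 < d\<close> by (auto simp: K_def mgf_domain_def)
  then show ?thesis
    using d[of K] by auto
qed

end

theorem proposition4:
  fixes M :: "'a measure"
    and l1 l2 l3 w1 w2 w3 a b :: real
    and s0 :: "'a \<Rightarrow> nat"
    and Z :: "nat \<Rightarrow> nat \<Rightarrow> 'a \<Rightarrow> real \<times> real"
    and C :: "nat \<Rightarrow> nat \<Rightarrow> 'a \<Rightarrow> bool"
  assumes "prob_space M"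
    and "l1 > 0" "l2 > 0" "l3 \<ge> 0" "w1 > 0" "w2 > 0" "w3 \<ge> 0"
    and "0 \<le> a" "a \<le> 1" "0 \<le> b" "b \<le> 1"
    and "b * (1 - a) + a * (1 - b) \<noteq> 0"
    and "s0 \<in> measurable M (count_space UNIV)"
    and "\<And>s j. Z s j \<in> borel_measurable M"
    and "\<And>s j. C s j \<in> measurable M (count_space UNIV)"
    and "\<forall>w\<in>space M. s0 w \<in> {1, 2}"
    and "measure M {w \<in> space M. s0 w = 1} = phi1 a b"
    and "\<And>j x y. 0 \<le> x \<Longrightarrow> 0 \<le> y \<Longrightarrow>
           measure M {w \<in> space M. x < fst (Z 1 j w) \<and> y < snd (Z 1 j w)} = BVE_surv l1 l2 l3 x y"
    and "\<And>j x y. 0 \<le> x \<Longrightarrow> 0 \<le> y \<Longrightarrow>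
           measure M {w \<in> space M. x < fst (Z 2 j w) \<and> y < snd (Z 2 j w)} = BVE_surv w1 w2 w3 x y"
    and "\<And>j. measure M {w \<in> space M. C 1 j w} = a"
    and "\<And>j. measure M {w \<in> space M. C 2 j w} = b"
    and "prob_space.indep_sets M
           (\<lambda>i. case i of
                  Init \<Rightarrow> gen_sets M s0 (count_space UNIV)
                | Incr s j \<Rightarrow> gen_sets M (Z s j) borel
                | Coin s j \<Rightarrow> gen_sets M (C s j) (count_space UNIV))
           mmpp_indices"
  shows "\<exists>K > 0. \<forall>th1 th2. th1 < K \<longrightarrow> th2 < K \<longrightarrow>
           integrable M (\<lambda>w. exp (fst (first_TK Z C s0 w) * th1 + snd (first_TK Z C s0 w) * th2)) \<and>
           (\<integral>w. exp (fst (first_TK Z C s0 w) * th1 + snd (first_TK Z C s0 w) * th2) \<partial>M)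
             = mmpp_H l1 l2 l3 w1 w2 w3 a b th1 th2"
proof -
  interpret bivariate_mmpp2 M l1 l2 l3 w1 w2 w3 a b s0 Z C
    by (rule bivariate_mmpp2.intro[OF assms(1)], rule bivariate_mmpp2_axioms.intro) (use assms in auto)
  obtain K where "0 < K" "mgf_domain K K" "cycle_factor K K < 1"
    using exists_mgf_radius by blast
  have "has_bochner_integral M (exp_TK th1 th2) (mmpp_H l1 l2 l3 w1 w2 w3 a b th1 th2)"
    if "th1 < K" "th2 < K" for th1 th2
  proof (rule has_bochner_integral_exp_TK_mmpp_H)
    show "mgf_domain th1 th2"
      using that \<open>mgf_domain K K\<close> by (auto simp: mgf_domain_def)
    show "cycle_factor th1 th2 < 1"
      using cycle_factor_mono[of th1 K th2] that \<open>mgf_domain K K\<close> \<open>cycle_factor K K < 1\<close> by simp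
  qed
  then show ?thesis
    using \<open>0 < K\<close> unfolding exp_TK_def[abs_def] by (auto simp: has_bochner_integral_iff)
qed

end
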